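(* Under the hypotheses of Theorem 4.1 (with $\Lambda=(\lambda_1,\dots,\lambda_n)$, $P$, $v_0$, $R$, $\theta$, $a^0$ as there), let $v^\epsilon(t)$ be the solution of $\dot v_j+\mathbf{i}\lambda_jv_j=\epsilon P_j(v)$, $1\le j\le n$, $v(0)=v_0$. Then for every $j$, $$\sup_{|t|\le\epsilon^{-1}\theta}\big||v^\epsilon_j(t)|-|a^0_j(\epsilon t)|\big|\to0\quad\text{as }\epsilon\to0.$$
   Context: Theorem 4.1 setting: $\Lambda\in(\mathbb{R}\setminus\{0\})^n$; $P\in\mathrm{Lip}_{\mathcal{X}}(\mathbb{C}^n,\mathbb{C}^n)$, i.e. $P$ is continuous with $\sup_{B_r}|P|\le\mathcal{X}(r)$ and $\mathrm{Lip}(P|_{B_r})\le\mathcal{X}(r)$ for all $r\ge0$, for a non-decreasing continuous $\mathcal{X}:\mathbb{R}_+\to\mathbb{R}_+$; $|v_0|=R>0$, $\mathcal{X}(2R)>0$, $\theta=R/\mathcal{X}(2R)$; $a^0$ is the solution on $[-\theta,\theta]$ of $\partial_\tau a=\langle\langle P\rangle\rangle(a)$, $a(0)=v_0$, where $\langle\langle P\rangle\rangle(a)=\lim_{T\to\pm\infty}\frac1{|T|}\int_0^T\Phi_{\Lambda t}P(\Phi_{-\Lambda t}a)\,dt$ and $\Phi_w=\mathrm{diag}(e^{\mathbf{i}w_j})$. *)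

theory Defs
  imports "HOL-Analysis.Analysis"
begin

definition Phi :: "real^'n \<Rightarrow> complex^'n \<Rightarrow> complex^'n" where
  "Phi w z = (\<chi> j. exp (\<i> * complex_of_real (w $ j)) * z $ j)"

definition Lip_X :: "(real \<Rightarrow> real) \<Rightarrow> (complex^'n \<Rightarrow> complex^'n) \<Rightarrow> bool" where
  "Lip_X X P \<longleftrightarrow> continuous_on UNIV P \<and>
     (\<forall>r\<ge>0. (\<forall>z\<in>cball 0 r. norm (P z) \<le> X r) \<and>
             (\<forall>x\<in>cball 0 r. \<forall>y\<in>cball 0 r. norm (P x - P y) \<le> X r * norm (x - y)))"

definition avg :: "real^'n \<Rightarrow> (complex^'n \<Rightarrow> complex^'n) \<Rightarrow> complex^'n \<Rightarrow> complex^'n" where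
  "avg \<Lambda> P a = Lim at_top (\<lambda>T. (1 / T) *\<^sub>R
      integral {0..T} (\<lambda>t. Phi (t *\<^sub>R \<Lambda>) (P (Phi (- (t *\<^sub>R \<Lambda>)) a))))"

end

theory Submission
  imports Defs
begin

(* In the interaction variables b(tau) = Phi_{(tau/eps) Lambda} v(tau/eps), whose components have
   the same moduli as those of v, the equation becomes b' = F(tau/eps, b) with
   F(t, z) = Phi_{t Lambda} P(Phi_{-t Lambda} z).  As a function of t, F(t, z) is a continuous
   function on a compact set evaluated along the orbit (e^{i lambda_j t})_j, hence (Stone-Weierstrass)
   a uniform limit of trigonometric polynomials; so it has a time mean, which is <<P>>(z).
   A continuity argument keeps b and a^0 in the ball of radius 2R on [0, theta], where F and <<P>>
   are bounded by K = X(2R) and K-Lipschitz.  Gronwall's inequality then bounds |b - a^0| by the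
   oscillatory integral of F(s/eps, a^0(s)) - <<P>>(a^0(s)) over [0, tau], and this integral tends
   to 0 uniformly in tau: freeze a^0 on a fine partition and use the convergence of the time means at
   the finitely many frozen points.  Negative times follow by applying this to -Lambda and -P. *)

section \<open>Time means\<close>

definition time_average :: "(real \<Rightarrow> 'a::real_normed_vector) \<Rightarrow> real \<Rightarrow> 'a" where
  "time_average g T = (1 / T) *\<^sub>R integral {0..T} g"

definition has_forward_mean :: "(real \<Rightarrow> 'a::real_normed_vector) \<Rightarrow> 'a \<Rightarrow> bool" where
  "has_forward_mean g L \<longleftrightarrow> (time_average g \<longlongrightarrow> L) at_top"

definition has_mean :: "(real \<Rightarrow> 'a::real_normed_vector) \<Rightarrow> 'a \<Rightarrow> bool" where
  "has_mean g L \<longleftrightarrow> has_forward_mean g L \<and> has_forward_mean (\<lambda>t. g (- t)) L"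

lemma integrable_continuous_UNIV:
  "continuous_on UNIV (g :: real \<Rightarrow> 'a::banach) \<Longrightarrow> g integrable_on {a..b}"
  by (rule integrable_continuous_interval) (auto intro: continuous_on_subset)

lemma norm_integral_le_const_bound:
  fixes f :: "real \<Rightarrow> 'a::banach"
  assumes "f integrable_on {a..b}" "a \<le> b" "\<And>s. s \<in> {a..b} \<Longrightarrow> norm (f s) \<le> B"
  shows "norm (integral {a..b} f) \<le> B * (b - a)"
proof -
  have "norm (integral {a..b} f) \<le> integral {a..b} (\<lambda>s. B)"
    by (rule integral_norm_bound_integral) (use assms in auto)
  also have "\<dots> = B * (b - a)"
    using assms(2) by (simp add: integral_const_real)
  finally show ?thesis .
qed

lemma continuous_on_reflect:
  fixes g :: "real \<Rightarrow> 'a::topological_space"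
  assumes "continuous_on UNIV g"
  shows "continuous_on UNIV (\<lambda>t. g (- t))"
  using assms by (auto intro!: continuous_on_compose2[OF _ continuous_on_minus[OF continuous_on_id]])

lemma time_average_diff:
  fixes g h :: "real \<Rightarrow> 'a::banach"
  assumes "continuous_on UNIV g" "continuous_on UNIV h"
  shows "time_average g T - time_average h T = time_average (\<lambda>t. g t - h t) T"
  using assms by (simp add: time_average_def integral_diff integrable_continuous_UNIV scaleR_diff_right)

lemma norm_time_average_le:
  fixes g :: "real \<Rightarrow> 'a::banach"
  assumes "continuous_on UNIV g" "T > 0" "\<And>t. t \<in> {0..T} \<Longrightarrow> norm (g t) \<le> B"
  shows "norm (time_average g T) \<le> B"
proof -
  have "norm (integral {0..T} g) \<le> B * (T - 0)"
    using assms by (intro norm_integral_le_const_bound integrable_continuous_UNIV) auto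
  then show ?thesis
    using assms(2) by (simp add: time_average_def divide_simps mult.commute)
qed

lemma norm_time_average_diff_le:
  fixes g h :: "real \<Rightarrow> 'a::banach"
  assumes "continuous_on UNIV g" "continuous_on UNIV h" "T > 0" "\<And>t. norm (g t - h t) \<le> B"
  shows "norm (time_average g T - time_average h T) \<le> B"
  unfolding time_average_diff[OF assms(1,2)]
  by (rule norm_time_average_le) (use assms in \<open>auto intro!: continuous_intros\<close>)

lemma has_forward_mean_add:
  fixes g h :: "real \<Rightarrow> 'a::banach"
  assumes "continuous_on UNIV g" "continuous_on UNIV h" "has_forward_mean g L" "has_forward_mean h M"
  shows "has_forward_mean (\<lambda>t. g t + h t) (L + M)"
proof -
  have "time_average (\<lambda>t. g t + h t) = (\<lambda>T. time_average g T + time_average h T)"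
    using assms(1,2)
    by (simp add: fun_eq_iff time_average_def integral_add integrable_continuous_UNIV scaleR_add_right)
  then show ?thesis
    using assms(3,4) unfolding has_forward_mean_def by (simp add: tendsto_add)
qed

lemma has_forward_mean_diff:
  fixes g h :: "real \<Rightarrow> 'a::banach"
  assumes "continuous_on UNIV g" "continuous_on UNIV h" "has_forward_mean g L" "has_forward_mean h M"
  shows "has_forward_mean (\<lambda>t. g t - h t) (L - M)"
proof -
  have "time_average (\<lambda>t. g t - h t) = (\<lambda>T. time_average g T - time_average h T)"
    by (simp add: fun_eq_iff time_average_diff[OF assms(1,2)])
  then show ?thesis
    using assms(3,4) unfolding has_forward_mean_def by (simp add: tendsto_diff)
qed

lemma has_forward_mean_linear:
  fixes g :: "real \<Rightarrow> 'a::banach"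
  assumes f: "bounded_linear f" and "continuous_on UNIV g" "has_forward_mean g L"
  shows "has_forward_mean (\<lambda>t. f (g t)) (f L)"
proof -
  have "time_average (\<lambda>t. f (g t)) = (\<lambda>T. f (time_average g T))"
    using integral_linear[OF integrable_continuous_UNIV[OF assms(2)] f]
    by (simp add: fun_eq_iff time_average_def o_def linear_simps(5)[OF f])
  then show ?thesis
    using assms(3) bounded_linear.tendsto[OF f] unfolding has_forward_mean_def by simp
qed

lemma has_forward_mean_sum:
  fixes g :: "'i \<Rightarrow> real \<Rightarrow> 'a::banach"
  assumes "finite I" "\<And>i. i \<in> I \<Longrightarrow> continuous_on UNIV (g i)"
    "\<And>i. i \<in> I \<Longrightarrow> has_forward_mean (g i) (L i)"
  shows "has_forward_mean (\<lambda>t. \<Sum>i\<in>I. g i t) (\<Sum>i\<in>I. L i)"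
  using assms
proof (induction I rule: finite_induct)
  case empty
  then show ?case by (simp add: has_forward_mean_def time_average_def[abs_def])
next
  case (insert x F)
  then show ?case
    by (simp, intro has_forward_mean_add continuous_on_sum) auto
qed

lemma has_mean_linear:
  fixes g :: "real \<Rightarrow> 'a::banach"
  assumes "bounded_linear f" "continuous_on UNIV g" "has_mean g L"
  shows "has_mean (\<lambda>t. f (g t)) (f L)"
  using assms continuous_on_reflect[OF assms(2)]
  unfolding has_mean_def by (auto intro: has_forward_mean_linear)

lemma has_mean_sum:
  fixes g :: "'i \<Rightarrow> real \<Rightarrow> 'a::banach"
  assumes "finite I" "\<And>i. i \<in> I \<Longrightarrow> continuous_on UNIV (g i)"
    "\<And>i. i \<in> I \<Longrightarrow> has_mean (g i) (L i)"
  shows "has_mean (\<lambda>t. \<Sum>i\<in>I. g i t) (\<Sum>i\<in>I. L i)"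
  using assms continuous_on_reflect[OF assms(2)]
  unfolding has_mean_def by (auto intro!: has_forward_mean_sum)

lemma norm_forward_mean_le:
  fixes g :: "real \<Rightarrow> 'a::banach"
  assumes "continuous_on UNIV g" "has_forward_mean g L" "\<And>t. t \<ge> 0 \<Longrightarrow> norm (g t) \<le> B"
  shows "norm L \<le> B"
proof (rule Lim_norm_ubound[OF trivial_limit_at_top_linorder assms(2)[unfolded has_forward_mean_def]])
  show "\<forall>\<^sub>F T in at_top. norm (time_average g T) \<le> B"
    using eventually_gt_at_top[of "0::real"]
    by eventually_elim (rule norm_time_average_le, use assms in auto)
qed

lemma has_forward_mean_exp_i:
  "has_forward_mean (\<lambda>t. exp (t *\<^sub>R (\<i> * complex_of_real w))) (if w = 0 then 1 else 0)"
proof (cases "w = 0")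
  case True
  have "\<forall>\<^sub>F T in at_top. time_average (\<lambda>t. 1::complex) T = 1"
    using eventually_gt_at_top[of "0::real"]
    by eventually_elim (simp add: time_average_def integral_const_real)
  then show ?thesis
    using True unfolding has_forward_mean_def by (simp add: tendsto_eventually)
next
  case False
  define c where "c = \<i> * complex_of_real w"
  have "c \<noteq> 0" using False by (simp add: c_def)
  have primitive: "((\<lambda>t. exp (t *\<^sub>R c) / c) has_vector_derivative exp (t *\<^sub>R c)) (at t within S)" for t S
    using bounded_linear.has_vector_derivative[OF bounded_linear_divide
        exp_scaleR_has_vector_derivative_right, of c c t S] \<open>c \<noteq> 0\<close>
    by simp
  have integral: "integral {0..T} (\<lambda>t. exp (t *\<^sub>R c)) = exp (T *\<^sub>R c) / c - 1 / c" if "T \<ge> 0" for T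
    using fundamental_theorem_of_calculus[OF that, of "\<lambda>t. exp (t *\<^sub>R c) / c"] primitive
    by (auto dest!: integral_unique)
  have unimodular: "norm (exp (T *\<^sub>R c)) = 1" for T
    by (simp add: c_def scaleR_conv_of_real mult.left_commute[of "complex_of_real T"] flip: of_real_mult)
  have bound: "norm (time_average (\<lambda>t. exp (t *\<^sub>R c)) T) \<le> (2 / norm c) / T" if "T > 0" for T
  proof -
    have "norm (exp (T *\<^sub>R c) / c - 1 / c) \<le> norm (exp (T *\<^sub>R c) / c) + norm (1 / c)"
      by (rule norm_triangle_ineq4)
    also have "\<dots> = 2 / norm c"
      by (simp only: norm_divide unimodular norm_one)
    finally have "norm (integral {0..T} (\<lambda>t. exp (t *\<^sub>R c))) \<le> 2 / norm c"
      using that by (simp add: integral)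
    from divide_right_mono[OF this less_imp_le[OF that]] show ?thesis
      using that by (simp add: time_average_def)
  qed
  have "\<forall>\<^sub>F T in at_top. norm (time_average (\<lambda>t. exp (t *\<^sub>R c)) T) \<le> (2 / norm c) / T"
    using eventually_gt_at_top[of "0::real"] by eventually_elim (rule bound)
  moreover have "((\<lambda>T. (2 / norm c) / T) \<longlongrightarrow> 0) at_top"
    by (rule tendsto_divide_0[OF tendsto_const filterlim_at_top_imp_at_infinity[OF filterlim_ident]])
  ultimately show ?thesis
    using False unfolding has_forward_mean_def c_def by (auto intro: Lim_null_comparison)
qed

section \<open>Trigonometric polynomials and their uniform limits\<close>

definition trig_poly :: "(complex \<times> real) list \<Rightarrow> real \<Rightarrow> complex" where
  "trig_poly cs t = (\<Sum>(c, w)\<leftarrow>cs. c * exp (t *\<^sub>R (\<i> * complex_of_real w)))"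

definition trig_poly_mean :: "(complex \<times> real) list \<Rightarrow> complex" where
  "trig_poly_mean cs = (\<Sum>(c, w)\<leftarrow>cs. if w = 0 then c else 0)"

lemma trig_poly_Nil [simp]: "trig_poly [] t = 0"
  by (simp add: trig_poly_def)

lemma trig_poly_Cons [simp]:
  "trig_poly ((c, w) # cs) t = c * exp (t *\<^sub>R (\<i> * complex_of_real w)) + trig_poly cs t"
  by (simp add: trig_poly_def)

lemma trig_poly_append: "trig_poly (cs @ ds) t = trig_poly cs t + trig_poly ds t"
  by (simp add: trig_poly_def)

lemma trig_poly_mean_Nil [simp]: "trig_poly_mean [] = 0"
  by (simp add: trig_poly_mean_def)

lemma trig_poly_mean_Cons [simp]:
  "trig_poly_mean ((c, w) # cs) = (if w = 0 then c else 0) + trig_poly_mean cs"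
  by (simp add: trig_poly_mean_def)

lemma continuous_on_trig_poly: "continuous_on UNIV (trig_poly cs)"
proof (induction cs)
  case Nil
  then show ?case by (simp add: trig_poly_def[abs_def])
next
  case (Cons p cs)
  obtain c w where p: "p = (c, w)" by fastforce
  have "trig_poly (p # cs) = (\<lambda>t. c * exp (t *\<^sub>R (\<i> * complex_of_real w)) + trig_poly cs t)"
    by (auto simp: p)
  then show ?case by (simp, intro continuous_intros Cons)
qed

lemma has_forward_mean_trig_poly: "has_forward_mean (trig_poly cs) (trig_poly_mean cs)"
proof (induction cs)
  case Nil
  then show ?case by (simp add: has_forward_mean_def time_average_def[abs_def] trig_poly_def[abs_def])
next
  case (Cons p cs)
  obtain c w where p: "p = (c, w)" by fastforce
  have expand: "trig_poly (p # cs) = (\<lambda>t. c * exp (t *\<^sub>R (\<i> * complex_of_real w)) + trig_poly cs t)"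
    by (auto simp: p)
  have monomial: "has_forward_mean (\<lambda>t. c * exp (t *\<^sub>R (\<i> * complex_of_real w)))
      (c * (if w = 0 then 1 else 0))"
    by (rule has_forward_mean_linear[OF bounded_linear_mult_right _ has_forward_mean_exp_i])
      (intro continuous_intros)
  have mean: "trig_poly_mean (p # cs) = c * (if w = 0 then 1 else 0) + trig_poly_mean cs"
    by (simp add: p)
  show ?case
    unfolding expand mean
    by (rule has_forward_mean_add[OF _ continuous_on_trig_poly monomial Cons]) (intro continuous_intros)
qed

lemma trig_poly_reflect: "trig_poly cs (- t) = trig_poly (map (\<lambda>(c, w). (c, - w)) cs) t"
  by (induction cs) auto

lemma trig_poly_mean_reflect: "trig_poly_mean (map (\<lambda>(c, w). (c, - w)) cs) = trig_poly_mean cs"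
  by (induction cs) auto

lemma has_mean_trig_poly: "has_mean (trig_poly cs) (trig_poly_mean cs)"
  unfolding has_mean_def trig_poly_reflect
  using has_forward_mean_trig_poly[of cs] has_forward_mean_trig_poly[of "map (\<lambda>(c, w). (c, - w)) cs"]
  by (simp add: trig_poly_mean_reflect)

definition trig_polynomial :: "(real \<Rightarrow> complex) \<Rightarrow> bool" where
  "trig_polynomial g \<longleftrightarrow> (\<exists>cs. g = trig_poly cs)"

lemma trig_polynomial_const: "trig_polynomial (\<lambda>t. c)"
  unfolding trig_polynomial_def by (rule exI[of _ "[(c, 0)]"]) auto

lemma trig_polynomial_exp_i: "trig_polynomial (\<lambda>t. exp (t *\<^sub>R (\<i> * complex_of_real w)))"
  unfolding trig_polynomial_def by (rule exI[of _ "[(1, w)]"]) auto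

lemma trig_polynomial_add:
  assumes "trig_polynomial f" "trig_polynomial g"
  shows "trig_polynomial (\<lambda>t. f t + g t)"
proof -
  obtain cs ds where "f = trig_poly cs" "g = trig_poly ds"
    using assms unfolding trig_polynomial_def by blast
  then show ?thesis
    unfolding trig_polynomial_def by (intro exI[of _ "cs @ ds"]) (simp add: fun_eq_iff trig_poly_append)
qed

lemma trig_poly_mult_monomial:
  "c * exp (t *\<^sub>R (\<i> * complex_of_real w)) * trig_poly ds t
     = trig_poly (map (\<lambda>(d, v). (c * d, w + v)) ds) t"
proof (induction ds)
  case (Cons p ds)
  obtain d v where p: "p = (d, v)" by fastforce
  have "exp (t *\<^sub>R (\<i> * complex_of_real w)) * exp (t *\<^sub>R (\<i> * complex_of_real v))
     = exp (t *\<^sub>R (\<i> * complex_of_real (w + v)))"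
    by (simp add: exp_add[symmetric] algebra_simps)
  then show ?case
    using Cons by (simp add: p algebra_simps)
qed simp

lemma trig_poly_mult:
  "trig_poly cs t * trig_poly ds t
     = trig_poly (concat (map (\<lambda>(c, w). map (\<lambda>(d, v). (c * d, w + v)) ds) cs)) t"
proof (induction cs)
  case (Cons p cs)
  obtain c w where p: "p = (c, w)" by fastforce
  show ?case
    using Cons trig_poly_mult_monomial[of c t w ds] by (simp add: p trig_poly_append distrib_right)
qed simp

lemma trig_polynomial_mult:
  "trig_polynomial f \<Longrightarrow> trig_polynomial g \<Longrightarrow> trig_polynomial (\<lambda>t. f t * g t)"
  unfolding trig_polynomial_def using trig_poly_mult by blast

lemma trig_polynomial_diff:
  assumes "trig_polynomial f" "trig_polynomial g"
  shows "trig_polynomial (\<lambda>t. f t - g t)"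
  using trig_polynomial_add[OF assms(1) trig_polynomial_mult[OF trig_polynomial_const[of "-1"] assms(2)]]
  by simp

lemma trig_polynomial_sum:
  "finite I \<Longrightarrow> (\<And>i. i \<in> I \<Longrightarrow> trig_polynomial (f i)) \<Longrightarrow> trig_polynomial (\<lambda>t. \<Sum>i\<in>I. f i t)"
  by (induction I rule: finite_induct) (auto intro: trig_polynomial_add trig_polynomial_const[of 0, simplified])

lemma trig_polynomial_has_mean: "trig_polynomial g \<Longrightarrow> \<exists>L. has_mean g L"
  unfolding trig_polynomial_def using has_mean_trig_poly by blast

lemma continuous_on_trig_polynomial: "trig_polynomial g \<Longrightarrow> continuous_on UNIV g"
  unfolding trig_polynomial_def using continuous_on_trig_poly by blast

lemma forward_means_of_approximants_close:
  fixes g :: "real \<Rightarrow> 'a::banach" and h :: "nat \<Rightarrow> real \<Rightarrow> 'a"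
  assumes cg: "continuous_on UNIV g" and ch: "\<And>k. continuous_on UNIV (h k)"
    and mean: "\<And>k. has_forward_mean (h k) (L k)"
    and approx: "\<And>k t. norm (g t - h k t) \<le> 1 / real (Suc k)"
  shows "norm (L k - L m) \<le> 1 / real (Suc k) + 1 / real (Suc m)"
proof (rule tendsto_le[OF trivial_limit_at_top_linorder tendsto_const])
  show "((\<lambda>T. norm (time_average (h k) T - time_average (h m) T)) \<longlongrightarrow> norm (L k - L m)) at_top"
    using mean[of k] mean[of m] unfolding has_forward_mean_def by (intro tendsto_intros)
  show "\<forall>\<^sub>F T in at_top.
      norm (time_average (h k) T - time_average (h m) T) \<le> 1 / real (Suc k) + 1 / real (Suc m)"
    using eventually_gt_at_top[of "0::real"]
  proof eventually_elim
    case (elim T)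
    have "norm (time_average (h k) T - time_average (h m) T)
        \<le> norm (time_average g T - time_average (h k) T) + norm (time_average g T - time_average (h m) T)"
      by (rule norm_diff_triangle_le[of _ "time_average g T"]) (simp_all add: norm_minus_commute)
    also have "\<dots> \<le> 1 / real (Suc k) + 1 / real (Suc m)"
      by (intro add_mono norm_time_average_diff_le[OF cg ch elim approx])
    finally show ?case .
  qed
qed

lemma has_forward_mean_uniform_limit:
  fixes g :: "real \<Rightarrow> 'a::banach" and h :: "nat \<Rightarrow> real \<Rightarrow> 'a"
  assumes cg: "continuous_on UNIV g" and ch: "\<And>k. continuous_on UNIV (h k)"
    and mean: "\<And>k. has_forward_mean (h k) (L k)"
    and approx: "\<And>k t. norm (g t - h k t) \<le> 1 / real (Suc k)"
    and L: "L \<longlonglongrightarrow> l"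
  shows "has_forward_mean g l"
  unfolding has_forward_mean_def
proof (rule tendstoI)
  fix e :: real
  assume "e > 0"
  obtain N where N: "inverse (real (Suc N)) < e / 3"
    using reals_Archimedean[of "e / 3"] \<open>e > 0\<close> by auto
  obtain M where M: "\<And>k. k \<ge> M \<Longrightarrow> dist (L k) l < e / 3"
    using L \<open>e > 0\<close> unfolding LIMSEQ_def by (metis divide_pos_pos zero_less_numeral)
  define k where "k = max N M"
  have "1 / real (Suc k) \<le> 1 / real (Suc N)"
    unfolding k_def by (simp add: frac_le)
  then have k_approx: "1 / real (Suc k) < e / 3"
    using N by (simp add: inverse_eq_divide)
  have k_limit: "dist (L k) l < e / 3"
    using M[of k] by (simp add: k_def)
  have "\<forall>\<^sub>F T in at_top. dist (time_average (h k) T) (L k) < e / 3"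
    using mean[of k] \<open>e > 0\<close> unfolding has_forward_mean_def by (intro tendstoD) auto
  then show "\<forall>\<^sub>F T in at_top. dist (time_average g T) l < e"
    using eventually_gt_at_top[of "0::real"]
  proof eventually_elim
    case (elim T)
    have "dist (time_average g T) (time_average (h k) T) \<le> 1 / real (Suc k)"
      unfolding dist_norm by (rule norm_time_average_diff_le[OF cg ch elim(2) approx])
    moreover have "dist (time_average g T) l
        \<le> dist (time_average g T) (time_average (h k) T) + dist (time_average (h k) T) (L k) + dist (L k) l"
      by (metis dist_triangle add.commute add_left_mono order_trans)
    ultimately show ?case
      using elim(1) k_approx k_limit by linarith
  qed
qed

lemma has_mean_uniform_limit:
  fixes g :: "real \<Rightarrow> 'a::banach" and h :: "nat \<Rightarrow> real \<Rightarrow> 'a"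
  assumes cg: "continuous_on UNIV g" and ch: "\<And>k. continuous_on UNIV (h k)"
    and mean: "\<And>k. has_mean (h k) (L k)"
    and approx: "\<And>k t. norm (g t - h k t) \<le> 1 / real (Suc k)"
  shows "\<exists>l. has_mean g l"
proof -
  have forward: "has_forward_mean (h k) (L k)" and backward: "has_forward_mean (\<lambda>t. h k (- t)) (L k)" for k
    using mean unfolding has_mean_def by auto
  have "Cauchy L"
  proof (rule metric_CauchyI)
    fix e :: real
    assume "e > 0"
    obtain N where N: "inverse (real (Suc N)) < e / 2"
      using reals_Archimedean[of "e / 2"] \<open>e > 0\<close> by auto
    have "dist (L m) (L n) < e" if "m \<ge> N" "n \<ge> N" for m n
    proof -
      have "1 / real (Suc m) \<le> 1 / real (Suc N)" "1 / real (Suc n) \<le> 1 / real (Suc N)"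
        using that by (auto simp add: frac_le)
      then show ?thesis
        using forward_means_of_approximants_close[OF cg ch forward approx, of m n] N
        by (simp add: dist_norm inverse_eq_divide)
    qed
    then show "\<exists>M. \<forall>m\<ge>M. \<forall>n\<ge>M. dist (L m) (L n) < e" by blast
  qed
  then obtain l where "L \<longlonglongrightarrow> l"
    using Cauchy_convergent convergent_def by blast
  then have "has_forward_mean g l" "has_forward_mean (\<lambda>t. g (- t)) l"
    using has_forward_mean_uniform_limit[OF cg ch forward approx]
      has_forward_mean_uniform_limit[OF continuous_on_reflect[OF cg] continuous_on_reflect[OF ch]
        backward approx]
    by auto
  then show ?thesis
    unfolding has_mean_def by blast
qed

section \<open>The rotated field and its mean\<close>

definition torus_orbit :: "real^'n \<Rightarrow> real \<Rightarrow> complex^'n" where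
  "torus_orbit \<Lambda> t = (\<chi> j. exp (t *\<^sub>R (\<i> * complex_of_real (\<Lambda> $ j))))"

lemma continuous_on_torus_orbit: "continuous_on S (torus_orbit \<Lambda>)"
  unfolding torus_orbit_def by (intro continuous_on_vec_lambda continuous_intros)

lemma norm_torus_orbit_le:
  fixes \<Lambda> :: "real^'n"
  shows "norm (torus_orbit \<Lambda> t) \<le> real CARD('n)"
proof -
  have "norm (torus_orbit \<Lambda> t) = L2_set (\<lambda>i. norm (torus_orbit \<Lambda> t $ i)) UNIV"
    by (simp add: norm_vec_def)
  also have "\<dots> \<le> (\<Sum>i\<in>UNIV. norm (torus_orbit \<Lambda> t $ i))"
    by (rule L2_set_le_sum) auto
  also have "\<dots> = real CARD('n)"
    by (simp add: torus_orbit_def scaleR_conv_of_real mult.left_commute[of "complex_of_real t"]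
        flip: of_real_mult)
  finally show ?thesis .
qed

lemma trig_polynomial_torus_orbit_nth: "trig_polynomial (\<lambda>t. torus_orbit \<Lambda> t $ j)"
  by (simp add: torus_orbit_def trig_polynomial_exp_i)

lemma trig_polynomial_cnj_torus_orbit_nth: "trig_polynomial (\<lambda>t. cnj (torus_orbit \<Lambda> t $ j))"
proof -
  have cnj_exp: "cnj (exp (t *\<^sub>R (\<i> * complex_of_real w))) = exp (t *\<^sub>R (\<i> * complex_of_real (- w)))"
    for t w by (simp add: exp_cnj scaleR_conv_of_real)
  show ?thesis
    unfolding torus_orbit_def vec_lambda_beta cnj_exp by (rule trig_polynomial_exp_i)
qed

lemma trig_polynomial_real_linear_torus_orbit:
  fixes f :: "complex^'n \<Rightarrow> real"
  assumes "bounded_linear f"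
  shows "trig_polynomial (\<lambda>t. complex_of_real (f (torus_orbit \<Lambda> t)))"
proof -
  have lin: "linear f"
    using assms bounded_linear.linear by blast
  have expansion: "x = (\<Sum>j\<in>UNIV. Re (x $ j) *\<^sub>R axis j 1 + Im (x $ j) *\<^sub>R axis j \<i>)" for x :: "complex^'n"
    by (simp add: vec_eq_iff sum_component axis_def complex_eq_iff if_distrib cong: if_cong)
  have f_expansion: "f x = (\<Sum>j\<in>UNIV. Re (x $ j) * f (axis j 1) + Im (x $ j) * f (axis j \<i>))" for x
    by (subst expansion[of x]) (simp add: linear_sum[OF lin] linear_add[OF lin] linear_scale[OF lin])
  have Re_cnj: "complex_of_real (Re z) = (z + cnj z) * (1 / 2)"
    and Im_cnj: "complex_of_real (Im z) = (z - cnj z) * (1 / (2 * \<i>))" for z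
    by (simp_all add: complex_add_cnj complex_diff_cnj)
  have "complex_of_real (f (torus_orbit \<Lambda> t))
      = (\<Sum>j\<in>UNIV. (torus_orbit \<Lambda> t $ j + cnj (torus_orbit \<Lambda> t $ j)) * (1 / 2) * complex_of_real (f (axis j 1))
          + (torus_orbit \<Lambda> t $ j - cnj (torus_orbit \<Lambda> t $ j)) * (1 / (2 * \<i>)) * complex_of_real (f (axis j \<i>)))"
    for t by (subst f_expansion) (simp only: of_real_sum of_real_add of_real_mult Re_cnj Im_cnj)
  then show ?thesis
    by (simp only:) (intro trig_polynomial_sum finite trig_polynomial_add trig_polynomial_mult
        trig_polynomial_const trig_polynomial_diff trig_polynomial_torus_orbit_nth
        trig_polynomial_cnj_torus_orbit_nth)
qed

lemma trig_polynomial_real_polynomial_torus_orbit: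
  "real_polynomial_function f \<Longrightarrow> trig_polynomial (\<lambda>t. complex_of_real (f (torus_orbit \<Lambda> t)))"
proof (induction rule: real_polynomial_function.induct)
  case (linear f)
  then show ?case by (rule trig_polynomial_real_linear_torus_orbit)
next
  case (const c)
  then show ?case by (rule trig_polynomial_const)
next
  case (add f g)
  then show ?case by (simp only: of_real_add) (rule trig_polynomial_add)
next
  case (mult f g)
  then show ?case by (simp only: of_real_mult) (rule trig_polynomial_mult)
qed

lemma polynomial_function_torus_orbit_has_mean:
  fixes g :: "complex^'n \<Rightarrow> complex^'n"
  assumes "polynomial_function g"
  shows "\<exists>L. has_mean (\<lambda>t. g (torus_orbit \<Lambda> t)) L"
proof -
  define gb where "gb b t = complex_of_real (g (torus_orbit \<Lambda> t) \<bullet> b)" for b t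
  have "real_polynomial_function (\<lambda>x. g x \<bullet> b)" for b
    using assms bounded_linear_inner_left[of b] unfolding polynomial_function_def o_def by blast
  then have trig: "trig_polynomial (gb b)" for b
    unfolding gb_def by (rule trig_polynomial_real_polynomial_torus_orbit)
  then have "\<forall>b. \<exists>L. has_mean (gb b) L"
    using trig_polynomial_has_mean by blast
  then obtain Lb where Lb: "\<And>b. has_mean (gb b) (Lb b)"
    by metis
  have "bounded_linear (\<lambda>z. Re z *\<^sub>R b)" for b :: "complex^'n"
    by (rule bounded_linear_compose[OF bounded_linear_scaleR_left bounded_linear_Re])
  then have "has_mean (\<lambda>t. Re (gb b t) *\<^sub>R b) (Re (Lb b) *\<^sub>R b)" for b
    by (rule has_mean_linear[OF _ continuous_on_trig_polynomial[OF trig] Lb])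
  then have "has_mean (\<lambda>t. \<Sum>b\<in>Basis. Re (gb b t) *\<^sub>R b) (\<Sum>b\<in>Basis. Re (Lb b) *\<^sub>R b)"
    by (intro has_mean_sum finite_Basis continuous_intros continuous_on_trig_polynomial[OF trig])
  moreover have "(\<lambda>t. \<Sum>b\<in>Basis. Re (gb b t) *\<^sub>R b) = (\<lambda>t. g (torus_orbit \<Lambda> t))"
    by (simp add: gb_def euclidean_representation)
  ultimately show ?thesis by auto
qed

lemma norm_Phi [simp]: "norm (Phi w z) = norm z"
  by (simp add: Phi_def norm_vec_def norm_mult norm_exp_i_times)

lemma norm_Phi_nth [simp]: "norm (Phi w z $ j) = norm (z $ j)"
  by (simp add: Phi_def norm_mult norm_exp_i_times)

lemma Phi_diff: "Phi w x - Phi w y = Phi w (x - y)"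
  by (simp add: Phi_def vec_eq_iff algebra_simps)

lemma Phi_minus: "Phi w (- x) = - Phi w x"
  by (simp add: Phi_def vec_eq_iff)

lemma Phi_zero [simp]: "Phi 0 z = z"
  by (simp add: Phi_def vec_eq_iff)

lemma Phi_inverse [simp]: "Phi (- w) (Phi w z) = z"
proof -
  have "exp (\<i> * complex_of_real (- w $ j)) * (exp (\<i> * complex_of_real (w $ j)) * z $ j) = z $ j" for j
    by (simp add: mult.assoc[symmetric] exp_add[symmetric])
  then show ?thesis
    by (simp add: Phi_def vec_eq_iff)
qed

lemma exp_i_scaleR_nth:
  "exp (\<i> * complex_of_real ((t *\<^sub>R \<Lambda>) $ j)) = exp (t *\<^sub>R (\<i> * complex_of_real (\<Lambda> $ j)))"
  by (simp only: vector_scaleR_component) (simp add: scaleR_conv_of_real mult_ac)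

lemma continuous_on_Phi:
  assumes "continuous_on S w" "continuous_on S z"
  shows "continuous_on S (\<lambda>s. Phi (w s) (z s))"
  unfolding Phi_def
  by (intro continuous_on_vec_lambda continuous_intros continuous_on_component assms)

lemma Lip_XD:
  assumes "Lip_X X P" "r \<ge> 0"
  shows "continuous_on UNIV P"
    and "norm z \<le> r \<Longrightarrow> norm (P z) \<le> X r"
    and "norm x \<le> r \<Longrightarrow> norm y \<le> r \<Longrightarrow> norm (P x - P y) \<le> X r * norm (x - y)"
  using assms unfolding Lip_X_def by (auto simp: mem_cball_0)

lemma Lip_X_minus: "Lip_X X P \<Longrightarrow> Lip_X X (\<lambda>z. - P z)"
  unfolding Lip_X_def by (simp add: norm_minus_commute continuous_on_minus)

definition rotated_field :: "real^'n \<Rightarrow> (complex^'n \<Rightarrow> complex^'n) \<Rightarrow> real \<Rightarrow> complex^'n \<Rightarrow> complex^'n" where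
  "rotated_field \<Lambda> P t z = Phi (t *\<^sub>R \<Lambda>) (P (Phi (- (t *\<^sub>R \<Lambda>)) z))"

lemma avg_eq_Lim_time_average:
  "avg \<Lambda> P z = Lim at_top (time_average (\<lambda>t. rotated_field \<Lambda> P t z))"
  by (simp add: avg_def time_average_def[abs_def] rotated_field_def)

lemma rotated_field_reflect: "rotated_field (- \<Lambda>) (\<lambda>z. - P z) t z = - rotated_field \<Lambda> P (- t) z"
  by (simp add: rotated_field_def Phi_minus)

lemma continuous_on_rotated_field:
  assumes "continuous_on UNIV P" "continuous_on S f" "continuous_on S g"
  shows "continuous_on S (\<lambda>s. rotated_field \<Lambda> P (f s) (g s))"
  unfolding rotated_field_def
  by (intro continuous_on_Phi continuous_intros assms continuous_on_compose2[OF assms(1)]) auto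

lemma norm_rotated_field_le:
  assumes "Lip_X X P" "r \<ge> 0" "norm z \<le> r"
  shows "norm (rotated_field \<Lambda> P t z) \<le> X r"
  unfolding rotated_field_def norm_Phi using assms by (simp add: Lip_XD(2))

lemma rotated_field_lipschitz:
  assumes "Lip_X X P" "r \<ge> 0" "norm x \<le> r" "norm y \<le> r"
  shows "norm (rotated_field \<Lambda> P t x - rotated_field \<Lambda> P t y) \<le> X r * norm (x - y)"
  unfolding rotated_field_def Phi_diff norm_Phi
  using Lip_XD(3)[OF assms(1,2), of "Phi (- (t *\<^sub>R \<Lambda>)) x" "Phi (- (t *\<^sub>R \<Lambda>)) y"] assms(3,4)
  by (simp add: Phi_diff)

text \<open>On the orbit \<open>x = torus_orbit \<Lambda> t\<close> the conjugate \<open>cnj (x $ k)\<close> is the rotation by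
  \<open>-t \<Lambda>\<close>, so the rotated field is a continuous function on a compact set evaluated along the orbit.\<close>

definition torus_lift :: "(complex^'n \<Rightarrow> complex^'n) \<Rightarrow> complex^'n \<Rightarrow> complex^'n \<Rightarrow> complex^'n" where
  "torus_lift P z x = (\<chi> j. x $ j * P (\<chi> k. cnj (x $ k) * z $ k) $ j)"

lemma rotated_field_eq_torus_lift: "rotated_field \<Lambda> P t z = torus_lift P z (torus_orbit \<Lambda> t)"
proof -
  have "exp (\<i> * complex_of_real ((- (t *\<^sub>R \<Lambda>)) $ j)) = cnj (torus_orbit \<Lambda> t $ j)" for j
    by (simp only: vector_uminus_component vector_scaleR_component exp_cnj torus_orbit_def vec_lambda_beta)
      (simp add: scaleR_conv_of_real mult_ac)
  then show ?thesis
    unfolding rotated_field_def torus_lift_def Phi_def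
    by (simp only: exp_i_scaleR_nth vec_lambda_beta torus_orbit_def)
qed

lemma continuous_on_torus_lift:
  assumes "continuous_on UNIV P"
  shows "continuous_on UNIV (torus_lift P z)"
proof -
  have "continuous_on UNIV (\<lambda>x. P (\<chi> k. cnj (x $ k) * z $ k))"
    by (rule continuous_on_compose2[OF assms]) (auto intro!: continuous_on_vec_lambda continuous_intros
        continuous_on_component)
  then show ?thesis
    unfolding torus_lift_def
    by (intro continuous_on_vec_lambda continuous_intros continuous_on_component)
qed

text \<open>In particular the limit taken by \<open>Lim\<close> in the definition of \<open>avg\<close> exists.\<close>

lemma has_mean_rotated_field:
  fixes P :: "complex^'n \<Rightarrow> complex^'n"
  assumes cP: "continuous_on UNIV P"
  shows "has_mean (\<lambda>t. rotated_field \<Lambda> P t z) (avg \<Lambda> P z)"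
proof -
  define S where "S = cball (0::complex^'n) (real CARD('n))"
  have "\<exists>g. polynomial_function g \<and> (\<forall>x\<in>S. norm (torus_lift P z x - g x) < 1 / real (Suc k))" for k
    by (rule Stone_Weierstrass_polynomial_function)
      (auto simp: S_def intro: continuous_on_subset[OF continuous_on_torus_lift[OF cP]])
  then obtain g where g_poly: "\<And>k. polynomial_function (g k)"
    and g_approx: "\<And>k x. x \<in> S \<Longrightarrow> norm (torus_lift P z x - g k x) < 1 / real (Suc k)"
    by metis
  have "\<forall>k. \<exists>L. has_mean (\<lambda>t. g k (torus_orbit \<Lambda> t)) L"
    using polynomial_function_torus_orbit_has_mean g_poly by blast
  then obtain L where L: "\<And>k. has_mean (\<lambda>t. g k (torus_orbit \<Lambda> t)) (L k)"
    by metis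
  have cont_approx: "continuous_on UNIV (\<lambda>t. g k (torus_orbit \<Lambda> t))" for k
    by (rule continuous_on_compose2[OF continuous_on_polymonial_function[OF g_poly]
          continuous_on_torus_orbit]) auto
  have approx: "norm (rotated_field \<Lambda> P t z - g k (torus_orbit \<Lambda> t)) \<le> 1 / real (Suc k)" for k t
    unfolding rotated_field_eq_torus_lift
    using g_approx[of "torus_orbit \<Lambda> t" k] norm_torus_orbit_le[of \<Lambda> t] by (simp add: S_def)
  have "continuous_on UNIV (\<lambda>t. rotated_field \<Lambda> P t z)"
    by (intro continuous_on_rotated_field cP continuous_intros)
  then obtain l where l: "has_mean (\<lambda>t. rotated_field \<Lambda> P t z) l"
    using has_mean_uniform_limit[OF _ cont_approx L approx] by blast
  then have "(time_average (\<lambda>t. rotated_field \<Lambda> P t z) \<longlongrightarrow> l) at_top"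
    unfolding has_mean_def has_forward_mean_def by auto
  then have "avg \<Lambda> P z = l"
    unfolding avg_eq_Lim_time_average by (rule tendsto_Lim[OF trivial_limit_at_top_linorder])
  then show ?thesis
    using l by simp
qed

lemma avg_reflect:
  assumes "continuous_on UNIV P"
  shows "avg (- \<Lambda>) (\<lambda>z. - P z) z = - avg \<Lambda> P z"
proof -
  have "has_forward_mean (\<lambda>t. rotated_field \<Lambda> P (- t) z) (avg \<Lambda> P z)"
    using has_mean_rotated_field[OF assms] unfolding has_mean_def by blast
  then have "has_forward_mean (\<lambda>t. rotated_field (- \<Lambda>) (\<lambda>z. - P z) t z) (- avg \<Lambda> P z)"
    unfolding rotated_field_reflect
    by (rule has_forward_mean_linear[OF bounded_linear_minus[OF bounded_linear_ident], rotated])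
      (intro continuous_on_rotated_field assms continuous_intros)
  then show ?thesis
    unfolding avg_eq_Lim_time_average has_forward_mean_def
    by (rule tendsto_Lim[OF trivial_limit_at_top_linorder])
qed

section \<open>Differential and integral inequalities\<close>

lemma bounded_linear_axis: "bounded_linear (axis i :: 'a::real_normed_vector \<Rightarrow> 'a^'n)"
proof (rule bounded_linear_intro[where K = 1])
  show "axis i (x + y) = axis i x + axis i y" for x y :: 'a
    by (auto simp: vec_eq_iff axis_def)
  show "axis i (r *\<^sub>R x) = r *\<^sub>R axis i x" for r and x :: 'a
    by (simp add: vec_eq_iff axis_def)
  show "norm (axis i x) \<le> norm x * 1" for x :: 'a
  proof -
    have "norm (axis i x) = L2_set (\<lambda>j. norm (axis i x $ j)) UNIV"
      by (simp add: norm_vec_def)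
    also have "\<dots> \<le> (\<Sum>j\<in>UNIV. norm (axis i x $ j))"
      by (rule L2_set_le_sum) auto
    also have "\<dots> = norm x"
      by (simp add: axis_def if_distrib cong: if_cong)
    finally show ?thesis by simp
  qed
qed

lemma has_vector_derivative_componentwise:
  fixes f :: "real \<Rightarrow> 'a::real_normed_vector^'n"
  assumes "\<And>i. ((\<lambda>x. f x $ i) has_vector_derivative f' $ i) F"
  shows "(f has_vector_derivative f') F"
proof -
  have expansion: "(y::'a^'n) = (\<Sum>i\<in>UNIV. axis i (y $ i))" for y
    by (simp add: vec_eq_iff sum_component axis_def if_distrib cong: if_cong)
  have "((\<lambda>x. \<Sum>i\<in>UNIV. axis i (f x $ i)) has_vector_derivative (\<Sum>i\<in>UNIV. axis i (f' $ i))) F"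
    by (intro has_vector_derivative_sum bounded_linear.has_vector_derivative[OF bounded_linear_axis] assms)
  then show ?thesis
    by (simp flip: expansion)
qed

lemma norm_diff_le_of_vector_derivative_bound:
  fixes y :: "real \<Rightarrow> 'a::real_normed_vector"
  assumes "a \<le> b" "\<And>x. x \<in> {a..b} \<Longrightarrow> (y has_vector_derivative y' x) (at x within {a..b})"
    "\<And>x. x \<in> {a..b} \<Longrightarrow> norm (y' x) \<le> B"
  shows "norm (y b - y a) \<le> B * (b - a)"
proof -
  have "onorm (\<lambda>h. h *\<^sub>R y' x) \<le> B" if "x \<in> {a..b}" for x
  proof (rule onorm_le)
    fix h :: real
    have "norm (h *\<^sub>R y' x) = norm h * norm (y' x)"
      by simp
    also have "\<dots> \<le> norm h * B"
      using assms(3)[OF that] by (simp add: mult_left_mono)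
    finally show "norm (h *\<^sub>R y' x) \<le> B * norm h"
      by (simp add: mult.commute)
  qed
  then have "norm (y b - y a) \<le> B * norm (b - a)"
    using assms by (intro differentiable_bound[of "{a..b}" y "\<lambda>x h. h *\<^sub>R y' x" B b a])
      (auto simp: has_vector_derivative_def)
  then show ?thesis
    using assms(1) by simp
qed

lemma continuity_induction:
  fixes Q :: "real \<Rightarrow> bool"
  assumes "0 \<le> \<theta>" "Q 0"
    and limit: "\<And>t. 0 < t \<Longrightarrow> t \<le> \<theta> \<Longrightarrow> (\<forall>s\<in>{0..<t}. Q s) \<Longrightarrow> Q t"
    and extend: "\<And>t. 0 \<le> t \<Longrightarrow> t < \<theta> \<Longrightarrow> (\<forall>s\<in>{0..t}. Q s) \<Longrightarrow> \<exists>d>0. \<forall>s\<in>{t..t+d}. Q s"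
  shows "\<forall>t\<in>{0..\<theta>}. Q t"
proof (rule ccontr)
  assume "\<not> (\<forall>t\<in>{0..\<theta>}. Q t)"
  define B where "B = {t\<in>{0..\<theta>}. \<not> Q t}"
  obtain b where b: "b \<in> B"
    using \<open>\<not> (\<forall>t\<in>{0..\<theta>}. Q t)\<close> by (auto simp: B_def)
  have bdd: "bdd_below B"
    by (rule bdd_belowI[of _ 0]) (auto simp: B_def)
  define T where "T = Inf B"
  have T_lower: "T \<le> x" if "x \<in> B" for x
    unfolding T_def by (rule cInf_lower[OF that bdd])
  have "0 \<le> T"
    unfolding T_def by (rule cInf_greatest) (use b in \<open>auto simp: B_def\<close>)
  have "T \<le> \<theta>"
    using T_lower[OF b] b by (auto simp: B_def)
  have below: "\<forall>s\<in>{0..<T}. Q s"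
    using T_lower \<open>T \<le> \<theta>\<close> by (force simp: B_def)
  then have "Q T"
    using limit[of T] \<open>0 \<le> T\<close> \<open>T \<le> \<theta>\<close> \<open>Q 0\<close> by (cases "T = 0") auto
  then have upto: "\<forall>s\<in>{0..T}. Q s"
    using below by (auto simp: less_eq_real_def)
  show False
  proof (cases "T < \<theta>")
    case False
    then show False
      using upto b \<open>T \<le> \<theta>\<close> by (auto simp: B_def)
  next
    case True
    obtain d where "d > 0" and d: "\<forall>s\<in>{T..T+d}. Q s"
      using extend[OF \<open>0 \<le> T\<close> True upto] by blast
    have "T + d \<le> Inf B"
    proof (rule cInf_greatest)
      show "B \<noteq> {}" using b by blast
      show "T + d \<le> x" if "x \<in> B" for x
        using T_lower[OF that] d that by (force simp: B_def)
    qed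
    then show False
      using \<open>d > 0\<close> by (simp add: T_def)
  qed
qed

lemma a_priori_displacement_bound:
  fixes y :: "real \<Rightarrow> 'a::real_normed_vector"
  assumes "\<theta> \<ge> 0" "K > 0" "K * \<theta> \<le> R" "norm (y 0) = R"
    and der: "\<And>\<tau>. \<tau> \<in> {0..\<theta>} \<Longrightarrow> (y has_vector_derivative y' \<tau>) (at \<tau> within {0..\<theta>})"
    and speed: "\<And>\<tau>. \<tau> \<in> {0..\<theta>} \<Longrightarrow> norm (y \<tau>) \<le> 2 * R \<Longrightarrow> norm (y' \<tau>) \<le> K"
  shows "\<forall>\<tau>\<in>{0..\<theta>}. norm (y \<tau> - y 0) \<le> K * \<tau>"
proof (rule continuity_induction[OF \<open>\<theta> \<ge> 0\<close>])
  have cont: "continuous_on {0..\<theta>} y"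
    by (rule continuous_on_vector_derivative[OF der])
  show "norm (y 0 - y 0) \<le> K * 0"
    by simp
  show "norm (y t - y 0) \<le> K * t"
    if t: "0 < t" "t \<le> \<theta>" and before: "\<forall>s\<in>{0..<t}. norm (y s - y 0) \<le> K * s" for t
  proof -
    have "continuous_on (closure {0..<t}) (\<lambda>s. K * s - norm (y s - y 0))"
      using t by (auto intro!: continuous_intros continuous_on_subset[OF cont])
    then have "0 \<le> K * t - norm (y t - y 0)"
      by (rule continuous_ge_on_closure) (use t before in auto)
    then show ?thesis by simp
  qed
  show "\<exists>d>0. \<forall>s\<in>{t..t+d}. norm (y s - y 0) \<le> K * s"
    if t: "0 \<le> t" "t < \<theta>" and upto: "\<forall>s\<in>{0..t}. norm (y s - y 0) \<le> K * s" for t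
  proof -
    have at_t: "norm (y t - y 0) \<le> K * t"
      using upto t by auto
    then have "norm (y t) \<le> R + K * t"
      using norm_triangle_ineq[of "y 0" "y t - y 0"] \<open>norm (y 0) = R\<close> by simp
    also have "\<dots> < 2 * R"
      using t \<open>K > 0\<close> \<open>K * \<theta> \<le> R\<close> mult_strict_left_mono[OF t(2) \<open>K > 0\<close>] by linarith
    finally have "2 * R - norm (y t) > 0" by simp
    moreover have "\<forall>e>0. \<exists>d>0. \<forall>x\<in>{0..\<theta>}. dist x t < d \<longrightarrow> dist (y x) (y t) < e"
      using cont t unfolding continuous_on_iff by auto
    ultimately obtain d where "d > 0"
      and d: "\<And>x. x \<in> {0..\<theta>} \<Longrightarrow> dist x t < d \<Longrightarrow> dist (y x) (y t) < 2 * R - norm (y t)"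
      by blast
    define d' where "d' = min (d / 2) (\<theta> - t)"
    have "norm (y s - y 0) \<le> K * s" if s: "s \<in> {t..t+d'}" for s
    proof -
      have sub: "{t..s} \<subseteq> {0..\<theta>}"
        using s t by (auto simp: d'_def)
      have "norm (y x) \<le> 2 * R" if x: "x \<in> {t..s}" for x
      proof -
        have "dist (y x) (y t) < 2 * R - norm (y t)"
          using x s sub \<open>d > 0\<close> by (intro d) (auto simp: d'_def dist_real_def)
        then show ?thesis
          using norm_triangle_ineq[of "y t" "y x - y t"] by (simp add: dist_norm)
      qed
      then have "norm (y s - y t) \<le> K * (s - t)"
        using s sub by (intro norm_diff_le_of_vector_derivative_bound[where y' = y'] speed
            has_vector_derivative_within_subset[OF der]) auto
      then show ?thesis
        using norm_triangle_ineq[of "y s - y t" "y t - y 0"] at_t by (simp add: algebra_simps)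
    qed
    moreover have "d' > 0"
      using \<open>d > 0\<close> t by (simp add: d'_def)
    ultimately show ?thesis by blast
  qed
qed

lemma gronwall_exp_bound:
  fixes u :: "real \<Rightarrow> real"
  assumes cont: "continuous_on {0..\<theta>} u" and "\<theta> \<ge> 0" "K \<ge> 0"
    and nonneg: "\<And>t. t \<in> {0..\<theta>} \<Longrightarrow> 0 \<le> u t"
    and integral_ineq: "\<And>t. t \<in> {0..\<theta>} \<Longrightarrow> u t \<le> \<eta> + integral {0..t} (\<lambda>s. K * u s)"
    and "\<tau> \<in> {0..\<theta>}"
  shows "u \<tau> \<le> \<eta> * exp (2 * K * \<theta>)"
proof -
  define w where "w s = u s / exp (2 * K * s)" for s
  have "continuous_on {0..\<theta>} w"
    unfolding w_def by (intro continuous_intros cont) auto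
  then have "\<exists>ts\<in>{0..\<theta>}. \<forall>s\<in>{0..\<theta>}. w s \<le> w ts"
    using \<open>\<theta> \<ge> 0\<close> by (intro continuous_attains_sup) auto
  then obtain ts where ts: "ts \<in> {0..\<theta>}" and ts_max: "\<And>s. s \<in> {0..\<theta>} \<Longrightarrow> w s \<le> w ts"
    by blast
  define N where "N = w ts"
  \<comment> \<open>At a maximum point of the weighted function the integral term is at most half of \<open>u\<close>.\<close>
  have u_le: "u s \<le> N * exp (2 * K * s)" if "s \<in> {0..\<theta>}" for s
    using ts_max[OF that] by (simp add: w_def N_def divide_le_eq)
  have u_ts: "u ts = N * exp (2 * K * ts)"
    by (simp add: w_def N_def)
  have primitive: "((\<lambda>s. N / 2 * exp (2 * K * s)) has_vector_derivative K * (N * exp (2 * K * s)))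
      (at s within S)" for s S
    unfolding has_real_derivative_iff_has_vector_derivative[symmetric]
    by (auto intro!: derivative_eq_intros simp: field_simps)
  have "((\<lambda>s. K * (N * exp (2 * K * s))) has_integral (N / 2 * exp (2 * K * ts) - N / 2 * exp (2 * K * 0)))
      {0..ts}"
    by (rule fundamental_theorem_of_calculus) (use ts primitive in auto)
  then have exp_integral: "((\<lambda>s. K * (N * exp (2 * K * s))) has_integral (N / 2 * exp (2 * K * ts) - N / 2))
      {0..ts}"
    by simp
  have "integral {0..ts} (\<lambda>s. K * u s) \<le> integral {0..ts} (\<lambda>s. K * (N * exp (2 * K * s)))"
    using ts u_le \<open>K \<ge> 0\<close> exp_integral
    by (intro integral_le integrable_continuous_interval continuous_intros
        continuous_on_subset[OF cont] mult_left_mono) auto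
  then have "u ts \<le> \<eta> + (N / 2 * exp (2 * K * ts) - N / 2)"
    using integral_ineq[OF ts] integral_unique[OF exp_integral] by linarith
  moreover have "N \<le> N * exp (2 * K * ts)"
    using ts \<open>K \<ge> 0\<close> nonneg[OF ts] u_ts by (simp add: mult_le_cancel_left1 zero_le_mult_iff)
  moreover have "N / 2 * exp (2 * K * ts) = u ts / 2"
    using u_ts by simp
  moreover have "N \<ge> 0"
    using nonneg[OF ts] by (simp add: N_def w_def)
  ultimately have "0 \<le> N" and "N \<le> \<eta>"
    using u_ts by linarith+
  have "u \<tau> \<le> N * exp (2 * K * \<tau>)"
    by (rule u_le[OF \<open>\<tau> \<in> {0..\<theta>}\<close>])
  also have "\<dots> \<le> \<eta> * exp (2 * K * \<theta>)"
    using \<open>0 \<le> N\<close> \<open>N \<le> \<eta>\<close> \<open>\<tau> \<in> {0..\<theta>}\<close> \<open>K \<ge> 0\<close>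
    by (intro mult_mono) (auto intro: mult_left_mono)
  finally show ?thesis .
qed

lemma norm_integral_initial_pieces_le:
  fixes f :: "real \<Rightarrow> 'a::banach" and N m :: nat
  assumes "h > 0" and int: "f integrable_on {0..real N * h}"
    and pieces: "\<And>k. k < N \<Longrightarrow> norm (integral {real k * h..real (Suc k) * h} f) \<le> c"
    and "m \<le> N"
  shows "norm (integral {0..real m * h} f) \<le> real m * c"
  using \<open>m \<le> N\<close>
proof (induction m)
  case (Suc m)
  have "real m * h \<le> real (Suc m) * h" "real (Suc m) * h \<le> real N * h"
    using \<open>h > 0\<close> Suc.prems by auto
  then have "integral {0..real (Suc m) * h} f = integral {0..real m * h} f + integral {real m * h..real (Suc m) * h} f"
    using \<open>h > 0\<close> by (intro Henstock_Kurzweil_Integration.integral_combine[symmetric]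
        integrable_subinterval_real[OF int]) simp_all
  then have "norm (integral {0..real (Suc m) * h} f)
      \<le> norm (integral {0..real m * h} f) + norm (integral {real m * h..real (Suc m) * h} f)"
    by (simp add: norm_triangle_ineq)
  also have "\<dots> \<le> real m * c + c"
    using Suc pieces[of m] by (intro add_mono) auto
  finally show ?case by (simp add: algebra_simps)
qed simp

lemma partition_node_below:
  fixes N :: nat
  assumes "h > 0" "\<tau> \<in> {0..real N * h}"
  obtains m where "m \<le> N" "real m * h \<le> \<tau>" "\<tau> \<le> real m * h + h"
proof -
  define m where "m = nat \<lfloor>\<tau> / h\<rfloor>"
  have "real m = of_int \<lfloor>\<tau> / h\<rfloor>"
    using assms by (simp add: m_def)
  then have "real m * h \<le> \<tau>" "\<tau> \<le> real m * h + h"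
    using floor_divide_lower[OF \<open>h > 0\<close>, of \<tau>] floor_divide_upper[OF \<open>h > 0\<close>, of \<tau>]
    by (simp_all add: algebra_simps)
  moreover have "\<tau> \<le> real N * h"
    using assms by simp
  ultimately have "real m * h \<le> real N * h"
    by linarith
  then have "m \<le> N"
    using \<open>h > 0\<close> by (simp add: mult_le_cancel_right)
  then show ?thesis
    using \<open>real m * h \<le> \<tau>\<close> \<open>\<tau> \<le> real m * h + h\<close> by (rule that)
qed

lemma norm_integral_le_uniform_partition:
  fixes f :: "real \<Rightarrow> 'a::banach" and h :: real and N :: nat
  assumes "h > 0" "c \<ge> 0" and int: "f integrable_on {0..real N * h}"
    and bound: "\<And>s. s \<in> {0..real N * h} \<Longrightarrow> norm (f s) \<le> B"
    and pieces: "\<And>k. k < N \<Longrightarrow> norm (integral {real k * h..real (Suc k) * h} f) \<le> c"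
    and \<tau>: "\<tau> \<in> {0..real N * h}"
  shows "norm (integral {0..\<tau>} f) \<le> real N * c + B * h"
proof -
  obtain m where "m \<le> N" "real m * h \<le> \<tau>" "\<tau> \<le> real m * h + h"
    using partition_node_below[OF \<open>h > 0\<close> \<tau>] .
  have "0 \<le> real m * h"
    using \<open>h > 0\<close> by simp
  have "0 \<le> norm (f 0)" "norm (f 0) \<le> B"
    using \<open>h > 0\<close> by (simp_all add: bound)
  then have "0 \<le> B"
    by linarith
  have "integral {0..\<tau>} f = integral {0..real m * h} f + integral {real m * h..\<tau>} f"
    using \<open>0 \<le> real m * h\<close> \<open>real m * h \<le> \<tau>\<close> \<tau>
    by (intro Henstock_Kurzweil_Integration.integral_combine[symmetric] integrable_subinterval_real[OF int])
      simp_all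
  then have "norm (integral {0..\<tau>} f) \<le> norm (integral {0..real m * h} f) + norm (integral {real m * h..\<tau>} f)"
    by (simp add: norm_triangle_ineq)
  also have "\<dots> \<le> real m * c + B * (\<tau> - real m * h)"
    using \<open>0 \<le> real m * h\<close> \<open>real m * h \<le> \<tau>\<close> \<open>m \<le> N\<close> \<tau>
    by (intro add_mono norm_integral_initial_pieces_le[OF \<open>h > 0\<close> int pieces] norm_integral_le_const_bound
        integrable_subinterval_real[OF int] bound) auto
  also have "\<dots> \<le> real N * c + B * h"
    using \<open>m \<le> N\<close> \<open>c \<ge> 0\<close> \<open>\<tau> \<le> real m * h + h\<close> \<open>0 \<le> B\<close>
    by (intro add_mono mult_right_mono mult_left_mono) auto
  finally show ?thesis .
qed

section \<open>The interaction representation\<close>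

lemma interaction_has_vector_derivative:
  fixes v :: "real \<Rightarrow> complex^'n"
  assumes "(v has_vector_derivative (\<chi> j. - \<i> * complex_of_real (\<Lambda> $ j) * (v t $ j)
      + complex_of_real \<epsilon> * (P (v t) $ j))) (at t within S)"
  shows "((\<lambda>t. Phi (t *\<^sub>R \<Lambda>) (v t)) has_vector_derivative
      \<epsilon> *\<^sub>R rotated_field \<Lambda> P t (Phi (t *\<^sub>R \<Lambda>) (v t))) (at t within S)"
proof (rule has_vector_derivative_componentwise)
  fix j
  define c where "c = \<i> * complex_of_real (\<Lambda> $ j)"
  have component: "(\<lambda>t. Phi (t *\<^sub>R \<Lambda>) (v t) $ j) = (\<lambda>t. exp (t *\<^sub>R c) * v t $ j)"
    by (simp only: Phi_def vec_lambda_beta exp_i_scaleR_nth c_def)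
  have "((\<lambda>t. exp (t *\<^sub>R c) * v t $ j) has_vector_derivative
      exp (t *\<^sub>R c) * (- c * v t $ j + complex_of_real \<epsilon> * P (v t) $ j) + exp (t *\<^sub>R c) * c * v t $ j)
      (at t within S)"
    using bounded_bilinear.has_vector_derivative[OF bounded_bilinear_mult
        exp_scaleR_has_vector_derivative_right
        bounded_linear.has_vector_derivative[OF bounded_linear_vec_nth assms, of j]]
    by (simp add: c_def)
  moreover have "(\<epsilon> *\<^sub>R rotated_field \<Lambda> P t (Phi (t *\<^sub>R \<Lambda>) (v t))) $ j
      = complex_of_real \<epsilon> * (exp (t *\<^sub>R c) * P (v t) $ j)"
    by (simp only: rotated_field_def Phi_inverse vector_scaleR_component)
      (simp only: Phi_def vec_lambda_beta exp_i_scaleR_nth c_def, simp only: scaleR_conv_of_real)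
  ultimately show "((\<lambda>t. Phi (t *\<^sub>R \<Lambda>) (v t) $ j) has_vector_derivative
      (\<epsilon> *\<^sub>R rotated_field \<Lambda> P t (Phi (t *\<^sub>R \<Lambda>) (v t))) $ j) (at t within S)"
    unfolding component by (simp add: algebra_simps)
qed

lemma rescaled_interaction_has_vector_derivative:
  fixes v :: "real \<Rightarrow> complex^'n"
  assumes "\<epsilon> > 0" "\<tau> \<in> {0..\<theta>}"
    and "(v has_vector_derivative (\<chi> j. - \<i> * complex_of_real (\<Lambda> $ j) * (v (\<tau> / \<epsilon>) $ j)
      + complex_of_real \<epsilon> * (P (v (\<tau> / \<epsilon>)) $ j))) (at (\<tau> / \<epsilon>) within {0..\<theta> / \<epsilon>})"
  shows "((\<lambda>\<tau>. Phi ((\<tau> / \<epsilon>) *\<^sub>R \<Lambda>) (v (\<tau> / \<epsilon>))) has_vector_derivative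
      rotated_field \<Lambda> P (\<tau> / \<epsilon>) (Phi ((\<tau> / \<epsilon>) *\<^sub>R \<Lambda>) (v (\<tau> / \<epsilon>)))) (at \<tau> within {0..\<theta>})"
proof -
  have "((\<lambda>t. Phi (t *\<^sub>R \<Lambda>) (v t)) has_vector_derivative
      \<epsilon> *\<^sub>R rotated_field \<Lambda> P (\<tau> / \<epsilon>) (Phi ((\<tau> / \<epsilon>) *\<^sub>R \<Lambda>) (v (\<tau> / \<epsilon>))))
      (at (\<tau> / \<epsilon>) within (\<lambda>x. x / \<epsilon>) ` {0..\<theta>})"
    by (rule has_vector_derivative_within_subset[OF interaction_has_vector_derivative[where v = v and \<Lambda> = \<Lambda> and \<epsilon> = \<epsilon> and P = P, OF assms(3)]])
      (use assms(1) in \<open>auto simp: divide_right_mono\<close>)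
  moreover have "((\<lambda>x. x / \<epsilon>) has_vector_derivative 1 / \<epsilon>) (at \<tau> within {0..\<theta>})"
    unfolding has_real_derivative_iff_has_vector_derivative[symmetric]
    using assms(1) by (auto intro!: derivative_eq_intros)
  ultimately have "((\<lambda>t. Phi (t *\<^sub>R \<Lambda>) (v t)) \<circ> (\<lambda>x. x / \<epsilon>) has_vector_derivative
      (1 / \<epsilon>) *\<^sub>R (\<epsilon> *\<^sub>R rotated_field \<Lambda> P (\<tau> / \<epsilon>) (Phi ((\<tau> / \<epsilon>) *\<^sub>R \<Lambda>) (v (\<tau> / \<epsilon>)))))
      (at \<tau> within {0..\<theta>})"
    by (intro vector_diff_chain_within) simp_all
  then show ?thesis
    using assms(1) by (simp add: o_def)
qed

lemma has_integral_rescaled: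
  fixes f :: "real \<Rightarrow> 'a::banach"
  assumes cont: "continuous_on UNIV f" and "\<epsilon> > 0" "0 \<le> \<alpha>" "\<alpha> \<le> \<beta>"
  shows "((\<lambda>s. f (s / \<epsilon>)) has_integral
      \<epsilon> *\<^sub>R (integral {0..\<beta> / \<epsilon>} f - integral {0..\<alpha> / \<epsilon>} f)) {\<alpha>..\<beta>}"
proof -
  define I where "I T = integral {0..T} f" for T
  have "((\<lambda>s. \<epsilon> *\<^sub>R I (s / \<epsilon>)) has_vector_derivative f (x / \<epsilon>)) (at x within {\<alpha>..\<beta>})"
    if x: "x \<in> {\<alpha>..\<beta>}" for x
  proof -
    have "(I has_vector_derivative f (x / \<epsilon>)) (at (x / \<epsilon>) within {0..\<beta> / \<epsilon>})"
      unfolding I_def using x assms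
      by (intro integral_has_vector_derivative continuous_on_subset[OF cont]) (auto simp: divide_right_mono)
    then have "(I has_vector_derivative f (x / \<epsilon>)) (at (x / \<epsilon>) within (\<lambda>x. x / \<epsilon>) ` {\<alpha>..\<beta>})"
      by (rule has_vector_derivative_within_subset) (use assms in \<open>auto simp: divide_right_mono\<close>)
    moreover have "((\<lambda>x. x / \<epsilon>) has_vector_derivative 1 / \<epsilon>) (at x within {\<alpha>..\<beta>})"
      unfolding has_real_derivative_iff_has_vector_derivative[symmetric]
      using assms by (auto intro!: derivative_eq_intros)
    ultimately have "(I \<circ> (\<lambda>x. x / \<epsilon>) has_vector_derivative (1 / \<epsilon>) *\<^sub>R f (x / \<epsilon>)) (at x within {\<alpha>..\<beta>})"
      by (intro vector_diff_chain_within)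
    then have "((\<lambda>s. \<epsilon> *\<^sub>R (I \<circ> (\<lambda>x. x / \<epsilon>)) s) has_vector_derivative \<epsilon> *\<^sub>R ((1 / \<epsilon>) *\<^sub>R f (x / \<epsilon>)))
        (at x within {\<alpha>..\<beta>})"
      by (rule bounded_linear.has_vector_derivative[OF bounded_linear_scaleR_right])
    then show ?thesis
      using assms by (simp add: o_def)
  qed
  then have "((\<lambda>s. f (s / \<epsilon>)) has_integral (\<epsilon> *\<^sub>R I (\<beta> / \<epsilon>) - \<epsilon> *\<^sub>R I (\<alpha> / \<epsilon>))) {\<alpha>..\<beta>}"
    using fundamental_theorem_of_calculus[OF \<open>\<alpha> \<le> \<beta>\<close>, of "\<lambda>s. \<epsilon> *\<^sub>R I (s / \<epsilon>)"] by simp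
  then show ?thesis
    by (simp add: I_def scaleR_diff_right)
qed

section \<open>The averaging estimate\<close>

locale averaging_problem =
  fixes \<Lambda> :: "real^'n" and P :: "complex^'n \<Rightarrow> complex^'n" and X :: "real \<Rightarrow> real"
    and v0 :: "complex^'n" and R \<theta> :: real and a :: "real \<Rightarrow> complex^'n"
  assumes P_Lip: "Lip_X X P" and norm_v0: "norm v0 = R" and R_pos: "R > 0"
    and K_pos: "X (2 * R) > 0" and \<theta>_eq: "\<theta> = R / X (2 * R)"
    and a_init: "a 0 = v0"
    and a_ode: "\<And>\<tau>. \<tau> \<in> {0..\<theta>} \<Longrightarrow> (a has_vector_derivative avg \<Lambda> P (a \<tau>)) (at \<tau> within {0..\<theta>})"
begin

abbreviation K :: real where "K \<equiv> X (2 * R)"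

lemma \<theta>_pos: "\<theta> > 0"
  using R_pos K_pos \<theta>_eq by simp

lemma K_mult_\<theta>: "K * \<theta> = R"
  using K_pos \<theta>_eq by simp

lemma continuous_P: "continuous_on UNIV P"
  using Lip_XD(1)[OF P_Lip order_refl] .

lemma has_forward_mean_field: "has_forward_mean (\<lambda>t. rotated_field \<Lambda> P t z) (avg \<Lambda> P z)"
  using has_mean_rotated_field[OF continuous_P] unfolding has_mean_def by blast

lemma continuous_on_field: "continuous_on UNIV (\<lambda>t. rotated_field \<Lambda> P t z)"
  by (intro continuous_on_rotated_field continuous_P continuous_intros)

lemma norm_field_le: "norm z \<le> 2 * R \<Longrightarrow> norm (rotated_field \<Lambda> P t z) \<le> K"
  using norm_rotated_field_le[OF P_Lip] R_pos by simp

lemma field_lipschitz: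
  "norm x \<le> 2 * R \<Longrightarrow> norm y \<le> 2 * R
    \<Longrightarrow> norm (rotated_field \<Lambda> P t x - rotated_field \<Lambda> P t y) \<le> K * norm (x - y)"
  using rotated_field_lipschitz[OF P_Lip] R_pos by simp

lemma norm_avg_le: "norm z \<le> 2 * R \<Longrightarrow> norm (avg \<Lambda> P z) \<le> K"
  by (rule norm_forward_mean_le[OF continuous_on_field has_forward_mean_field norm_field_le])

lemma avg_lipschitz:
  assumes "norm x \<le> 2 * R" "norm y \<le> 2 * R"
  shows "norm (avg \<Lambda> P x - avg \<Lambda> P y) \<le> K * norm (x - y)"
  by (rule norm_forward_mean_le[OF _ has_forward_mean_diff[OF continuous_on_field continuous_on_field
        has_forward_mean_field has_forward_mean_field]])
    (intro continuous_intros continuous_on_field field_lipschitz assms)+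

lemma norm_le_of_bounded_speed:
  assumes "y 0 = v0"
    and der: "\<And>\<tau>. \<tau> \<in> {0..\<theta>} \<Longrightarrow> (y has_vector_derivative y' \<tau>) (at \<tau> within {0..\<theta>})"
    and speed: "\<And>\<tau>. \<tau> \<in> {0..\<theta>} \<Longrightarrow> norm (y \<tau>) \<le> 2 * R \<Longrightarrow> norm (y' \<tau>) \<le> K"
    and "\<tau> \<in> {0..\<theta>}"
  shows "norm (y \<tau>) \<le> 2 * R"
proof -
  have "norm (y \<tau> - v0) \<le> K * \<tau>"
    using a_priori_displacement_bound[of \<theta> K R y y', OF _ K_pos _ _ der speed] \<theta>_pos K_mult_\<theta>
      \<open>y 0 = v0\<close> norm_v0 \<open>\<tau> \<in> {0..\<theta>}\<close> by auto
  also have "\<dots> \<le> K * \<theta>"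
    using \<open>\<tau> \<in> {0..\<theta>}\<close> K_pos by (auto intro: mult_left_mono)
  finally show ?thesis
    using norm_triangle_ineq[of v0 "y \<tau> - v0"] norm_v0 K_mult_\<theta> by simp
qed

lemma norm_a_le: "\<tau> \<in> {0..\<theta>} \<Longrightarrow> norm (a \<tau>) \<le> 2 * R"
  by (rule norm_le_of_bounded_speed[OF a_init a_ode norm_avg_le])

lemma continuous_on_a: "continuous_on {0..\<theta>} a"
  by (rule continuous_on_vector_derivative[OF a_ode])

lemma continuous_on_avg_a: "continuous_on {0..\<theta>} (\<lambda>s. avg \<Lambda> P (a s))"
proof -
  have "K-lipschitz_on (cball 0 (2 * R)) (avg \<Lambda> P)"
    using K_pos avg_lipschitz by (intro lipschitz_onI) (auto simp: dist_norm)
  then show ?thesis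
    by (rule continuous_on_compose2[OF lipschitz_on_continuous_on continuous_on_a])
      (auto dest: norm_a_le)
qed

lemma continuous_on_field_a:
  "\<epsilon> > 0 \<Longrightarrow> continuous_on {0..\<theta>} (\<lambda>s. rotated_field \<Lambda> P (s / \<epsilon>) (a s))"
  by (intro continuous_on_rotated_field continuous_P continuous_on_a continuous_intros) auto

abbreviation oscillation :: "real \<Rightarrow> real \<Rightarrow> complex^'n" where
  "oscillation \<epsilon> s \<equiv> rotated_field \<Lambda> P (s / \<epsilon>) (a s) - avg \<Lambda> P (a s)"

lemma error_integral_inequality:
  assumes "\<epsilon> > 0" and "b 0 = v0"
    and b_ode: "\<And>\<tau>. \<tau> \<in> {0..\<theta>} \<Longrightarrow>
      (b has_vector_derivative rotated_field \<Lambda> P (\<tau> / \<epsilon>) (b \<tau>)) (at \<tau> within {0..\<theta>})"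
    and "t \<in> {0..\<theta>}"
  shows "norm (b t - a t) \<le> norm (integral {0..t} (oscillation \<epsilon>)) + integral {0..t} (\<lambda>s. K * norm (b s - a s))"
proof -
  have norm_b_le: "norm (b s) \<le> 2 * R" if "s \<in> {0..\<theta>}" for s
    by (rule norm_le_of_bounded_speed[OF \<open>b 0 = v0\<close> b_ode norm_field_le that])
  have cont_b: "continuous_on {0..\<theta>} b"
    by (rule continuous_on_vector_derivative[OF b_ode])
  have sub: "{0..t} \<subseteq> {0..\<theta>}"
    using \<open>t \<in> {0..\<theta>}\<close> by auto
  have int: "f integrable_on {0..t}" if "continuous_on {0..\<theta>} f" for f :: "real \<Rightarrow> complex^'n"
    using that by (intro integrable_continuous_interval continuous_on_subset[OF _ sub])
  have cont_field_b: "continuous_on {0..\<theta>} (\<lambda>s. rotated_field \<Lambda> P (s / \<epsilon>) (b s))"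
    using \<open>\<epsilon> > 0\<close> by (intro continuous_on_rotated_field continuous_P cont_b continuous_intros) auto
  have "((\<lambda>s. rotated_field \<Lambda> P (s / \<epsilon>) (b s) - avg \<Lambda> P (a s)) has_integral (b t - a t) - (b 0 - a 0))
      {0..t}"
    using \<open>t \<in> {0..\<theta>}\<close> sub by (intro fundamental_theorem_of_calculus has_vector_derivative_diff
        has_vector_derivative_within_subset[OF b_ode] has_vector_derivative_within_subset[OF a_ode])
      auto
  then have "integral {0..t} (\<lambda>s. rotated_field \<Lambda> P (s / \<epsilon>) (b s) - avg \<Lambda> P (a s)) = b t - a t"
    using \<open>b 0 = v0\<close> a_init by (simp add: integral_unique)
  moreover have "integral {0..t} (\<lambda>s. (rotated_field \<Lambda> P (s / \<epsilon>) (b s) - rotated_field \<Lambda> P (s / \<epsilon>) (a s))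
        + oscillation \<epsilon> s)
      = integral {0..t} (\<lambda>s. rotated_field \<Lambda> P (s / \<epsilon>) (b s) - rotated_field \<Lambda> P (s / \<epsilon>) (a s))
        + integral {0..t} (oscillation \<epsilon>)"
    using \<open>\<epsilon> > 0\<close> by (intro integral_add integrable_diff int cont_field_b continuous_on_field_a
        continuous_on_avg_a)
  ultimately have "norm (b t - a t)
      \<le> norm (integral {0..t} (\<lambda>s. rotated_field \<Lambda> P (s / \<epsilon>) (b s) - rotated_field \<Lambda> P (s / \<epsilon>) (a s)))
        + norm (integral {0..t} (oscillation \<epsilon>))"
    by (simp add: norm_triangle_ineq)
  also have "\<dots> \<le> integral {0..t} (\<lambda>s. K * norm (b s - a s)) + norm (integral {0..t} (oscillation \<epsilon>))"
    using sub \<open>\<epsilon> > 0\<close>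
    by (intro add_right_mono integral_norm_bound_integral int continuous_on_diff cont_field_b
        continuous_on_field_a field_lipschitz norm_b_le norm_a_le integrable_continuous_interval
        continuous_on_subset[OF _ sub] continuous_intros cont_b continuous_on_a) auto
  finally show ?thesis
    by simp
qed

lemma error_le_oscillation:
  assumes "\<epsilon> > 0" and "b 0 = v0"
    and b_ode: "\<And>\<tau>. \<tau> \<in> {0..\<theta>} \<Longrightarrow>
      (b has_vector_derivative rotated_field \<Lambda> P (\<tau> / \<epsilon>) (b \<tau>)) (at \<tau> within {0..\<theta>})"
    and oscillation_le: "\<And>\<tau>. \<tau> \<in> {0..\<theta>} \<Longrightarrow> norm (integral {0..\<tau>} (oscillation \<epsilon>)) \<le> \<eta>"
    and "\<tau> \<in> {0..\<theta>}"
  shows "norm (b \<tau> - a \<tau>) \<le> \<eta> * exp (2 * K * \<theta>)"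
proof (rule gronwall_exp_bound[where u = "\<lambda>s. norm (b s - a s)"])
  show "continuous_on {0..\<theta>} (\<lambda>s. norm (b s - a s))"
    by (intro continuous_intros continuous_on_vector_derivative[OF b_ode] continuous_on_a)
  show "norm (b t - a t) \<le> \<eta> + integral {0..t} (\<lambda>s. K * norm (b s - a s))" if "t \<in> {0..\<theta>}" for t
    using error_integral_inequality[OF assms(1-3) that] oscillation_le[OF that] by linarith
qed (use \<theta>_pos K_pos \<open>\<tau> \<in> {0..\<theta>}\<close> in auto)

abbreviation drift :: "complex^'n \<Rightarrow> real \<Rightarrow> complex^'n" where
  "drift z T \<equiv> integral {0..T} (\<lambda>t. rotated_field \<Lambda> P t z) - T *\<^sub>R avg \<Lambda> P z"

lemma norm_drift_le:
  assumes "norm z \<le> 2 * R" "T1 > 0" "\<gamma> \<ge> 0" "T \<ge> 0"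
    and mean_close: "\<And>T. T \<ge> T1 \<Longrightarrow> norm (time_average (\<lambda>t. rotated_field \<Lambda> P t z) T - avg \<Lambda> P z) \<le> \<gamma>"
  shows "norm (drift z T) \<le> \<gamma> * T + 2 * K * T1"
proof (cases "T \<ge> T1")
  case True
  then have "T > 0"
    using \<open>T1 > 0\<close> by simp
  then have "integral {0..T} (\<lambda>t. rotated_field \<Lambda> P t z) - T *\<^sub>R avg \<Lambda> P z
      = T *\<^sub>R (time_average (\<lambda>t. rotated_field \<Lambda> P t z) T - avg \<Lambda> P z)"
    by (simp add: time_average_def scaleR_diff_right)
  then have "norm (integral {0..T} (\<lambda>t. rotated_field \<Lambda> P t z) - T *\<^sub>R avg \<Lambda> P z) \<le> T * \<gamma>"
    using mean_close[OF True] \<open>T > 0\<close> by (simp add: mult_left_mono)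
  then show ?thesis
    using K_pos \<open>T1 > 0\<close> by (simp add: mult.commute add_increasing2)
next
  case False
  have "norm (integral {0..T} (\<lambda>t. rotated_field \<Lambda> P t z)) \<le> K * (T - 0)"
    using \<open>T \<ge> 0\<close> \<open>norm z \<le> 2 * R\<close>
    by (intro norm_integral_le_const_bound integrable_continuous_UNIV continuous_on_field norm_field_le)
  moreover have "norm (T *\<^sub>R avg \<Lambda> P z) \<le> T * K"
    using norm_avg_le[OF \<open>norm z \<le> 2 * R\<close>] \<open>T \<ge> 0\<close> by (simp add: mult_left_mono)
  moreover have "K * T \<le> K * T1" "0 \<le> \<gamma> * T"
    using False K_pos \<open>\<gamma> \<ge> 0\<close> \<open>T \<ge> 0\<close> by auto
  ultimately show ?thesis
    using norm_triangle_ineq4[of "integral {0..T} (\<lambda>t. rotated_field \<Lambda> P t z)" "T *\<^sub>R avg \<Lambda> P z"]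
    by (simp add: algebra_simps)
qed

lemma norm_frozen_oscillation_le:
  assumes "\<epsilon> > 0" "0 \<le> \<alpha>" "\<alpha> \<le> \<beta>"
    and drift_le: "\<And>T. T \<ge> 0 \<Longrightarrow> norm (drift z T) \<le> \<gamma> * T + C"
  shows "norm (integral {\<alpha>..\<beta>} (\<lambda>s. rotated_field \<Lambda> P (s / \<epsilon>) z - avg \<Lambda> P z))
    \<le> \<gamma> * (\<alpha> + \<beta>) + 2 * \<epsilon> * C"
proof -
  have "((\<lambda>s. rotated_field \<Lambda> P (s / \<epsilon>) z - avg \<Lambda> P z) has_integral
      (\<epsilon> *\<^sub>R (integral {0..\<beta> / \<epsilon>} (\<lambda>t. rotated_field \<Lambda> P t z)
        - integral {0..\<alpha> / \<epsilon>} (\<lambda>t. rotated_field \<Lambda> P t z)) - (\<beta> - \<alpha>) *\<^sub>R avg \<Lambda> P z)) {\<alpha>..\<beta>}"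
    using assms
    by (intro has_integral_diff has_integral_rescaled[where f = "\<lambda>t. rotated_field \<Lambda> P t z"]
        continuous_on_field) (use has_integral_const_real[of "avg \<Lambda> P z" \<alpha> \<beta>] in auto)
  moreover have "\<epsilon> *\<^sub>R (integral {0..\<beta> / \<epsilon>} (\<lambda>t. rotated_field \<Lambda> P t z)
      - integral {0..\<alpha> / \<epsilon>} (\<lambda>t. rotated_field \<Lambda> P t z)) - (\<beta> - \<alpha>) *\<^sub>R avg \<Lambda> P z
      = \<epsilon> *\<^sub>R (drift z (\<beta> / \<epsilon>) - drift z (\<alpha> / \<epsilon>))"
    using \<open>\<epsilon> > 0\<close> by (simp add: algebra_simps)
  ultimately have "norm (integral {\<alpha>..\<beta>} (\<lambda>s. rotated_field \<Lambda> P (s / \<epsilon>) z - avg \<Lambda> P z))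
      = \<epsilon> * norm (drift z (\<beta> / \<epsilon>) - drift z (\<alpha> / \<epsilon>))"
    using \<open>\<epsilon> > 0\<close> by (simp add: integral_unique)
  also have "\<dots> \<le> \<epsilon> * ((\<gamma> * (\<beta> / \<epsilon>) + C) + (\<gamma> * (\<alpha> / \<epsilon>) + C))"
    using assms by (intro mult_left_mono order_trans[OF norm_triangle_ineq4] add_mono drift_le) auto
  also have "\<dots> = \<gamma> * (\<alpha> + \<beta>) + 2 * \<epsilon> * C"
    using \<open>\<epsilon> > 0\<close> by (simp add: field_simps)
  finally show ?thesis .
qed

lemma frozen_oscillation_le:
  assumes "\<epsilon> > 0" "0 \<le> \<alpha>" "\<alpha> \<le> \<beta>" "\<beta> \<le> \<theta>" "norm z \<le> 2 * R"
    and close: "\<And>s. s \<in> {\<alpha>..\<beta>} \<Longrightarrow> norm (a s - z) \<le> \<rho>"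
    and drift_le: "\<And>T. T \<ge> 0 \<Longrightarrow> norm (drift z T) \<le> \<gamma> * T + C"
  shows "norm (integral {\<alpha>..\<beta>} (oscillation \<epsilon>)) \<le> 2 * K * \<rho> * (\<beta> - \<alpha>) + \<gamma> * (\<alpha> + \<beta>) + 2 * \<epsilon> * C"
proof -
  define q where "q s = rotated_field \<Lambda> P (s / \<epsilon>) z - avg \<Lambda> P z" for s
  have sub: "{\<alpha>..\<beta>} \<subseteq> {0..\<theta>}"
    using assms by auto
  have q_int: "q integrable_on {\<alpha>..\<beta>}"
    unfolding q_def using \<open>\<epsilon> > 0\<close>
    by (intro integrable_continuous_interval continuous_on_diff continuous_on_rotated_field continuous_P
        continuous_intros) auto
  have osc_int: "oscillation \<epsilon> integrable_on {\<alpha>..\<beta>}"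
    using \<open>\<epsilon> > 0\<close>
    by (intro integrable_continuous_interval continuous_on_subset[OF _ sub] continuous_on_diff
        continuous_on_field_a continuous_on_avg_a)
  have "norm (oscillation \<epsilon> s - q s) \<le> 2 * K * \<rho>" if "s \<in> {\<alpha>..\<beta>}" for s
  proof -
    have "oscillation \<epsilon> s - q s = (rotated_field \<Lambda> P (s / \<epsilon>) (a s) - rotated_field \<Lambda> P (s / \<epsilon>) z)
        - (avg \<Lambda> P (a s) - avg \<Lambda> P z)"
      by (simp add: q_def algebra_simps)
    then have "norm (oscillation \<epsilon> s - q s)
        \<le> norm (rotated_field \<Lambda> P (s / \<epsilon>) (a s) - rotated_field \<Lambda> P (s / \<epsilon>) z)
          + norm (avg \<Lambda> P (a s) - avg \<Lambda> P z)"
      by (simp only: norm_triangle_ineq4)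
    also have "\<dots> \<le> K * \<rho> + K * \<rho>"
      using that sub close[OF that] K_pos \<open>norm z \<le> 2 * R\<close>
      by (intro add_mono order_trans[OF field_lipschitz] order_trans[OF avg_lipschitz] mult_left_mono
          norm_a_le) auto
    finally show ?thesis by (simp add: mult_ac)
  qed
  then have diff_le: "norm (integral {\<alpha>..\<beta>} (\<lambda>s. oscillation \<epsilon> s - q s)) \<le> 2 * K * \<rho> * (\<beta> - \<alpha>)"
    using \<open>\<alpha> \<le> \<beta>\<close> by (intro norm_integral_le_const_bound integrable_diff[OF osc_int q_int]) auto
  have frozen_le: "norm (integral {\<alpha>..\<beta>} q) \<le> \<gamma> * (\<alpha> + \<beta>) + 2 * \<epsilon> * C"
    unfolding q_def using assms by (intro norm_frozen_oscillation_le)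
  have "integral {\<alpha>..\<beta>} (oscillation \<epsilon>)
      = integral {\<alpha>..\<beta>} (\<lambda>s. oscillation \<epsilon> s - q s) + integral {\<alpha>..\<beta>} q"
    using integral_diff[OF osc_int q_int] by simp
  then have "norm (integral {\<alpha>..\<beta>} (oscillation \<epsilon>))
      \<le> norm (integral {\<alpha>..\<beta>} (\<lambda>s. oscillation \<epsilon> s - q s)) + norm (integral {\<alpha>..\<beta>} q)"
    by (simp only: norm_triangle_ineq)
  also have "\<dots> \<le> 2 * K * \<rho> * (\<beta> - \<alpha>) + (\<gamma> * (\<alpha> + \<beta>) + 2 * \<epsilon> * C)"
    by (rule add_mono[OF diff_le frozen_le])
  finally show ?thesis
    by (simp only: add.assoc)
qed

lemma oscillation_le_partition:
  assumes "\<epsilon> > 0" "h > 0" and Nh: "real N * h = \<theta>"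
    and close: "\<And>k s. k < N \<Longrightarrow> s \<in> {real k * h..real (Suc k) * h} \<Longrightarrow> norm (a s - a (real k * h)) \<le> \<rho>"
    and drift_le: "\<And>k T. k < N \<Longrightarrow> T \<ge> 0 \<Longrightarrow> norm (drift (a (real k * h)) T) \<le> \<gamma> * T + C"
    and "\<rho> \<ge> 0" "\<gamma> \<ge> 0" "C \<ge> 0" "\<tau> \<in> {0..\<theta>}"
  shows "norm (integral {0..\<tau>} (oscillation \<epsilon>)) \<le> real N * (2 * K * \<rho> * h + 2 * \<gamma> * \<theta> + 2 * \<epsilon> * C) + 2 * K * h"
proof (rule norm_integral_le_uniform_partition[where N = N, OF \<open>h > 0\<close>, unfolded Nh])
  show "norm (integral {real k * h..real (Suc k) * h} (oscillation \<epsilon>))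
      \<le> 2 * K * \<rho> * h + 2 * \<gamma> * \<theta> + 2 * \<epsilon> * C" if "k < N" for k
  proof -
    have "real (Suc k) * h \<le> \<theta>"
      using that \<open>h > 0\<close> Nh by (metis Suc_leI mult_right_mono of_nat_le_iff less_imp_le)
    moreover have "norm (a (real k * h)) \<le> 2 * R"
      using \<open>real (Suc k) * h \<le> \<theta>\<close> \<open>h > 0\<close> by (intro norm_a_le) (auto simp: algebra_simps)
    ultimately have "norm (integral {real k * h..real (Suc k) * h} (oscillation \<epsilon>))
        \<le> 2 * K * \<rho> * (real (Suc k) * h - real k * h) + \<gamma> * (real k * h + real (Suc k) * h) + 2 * \<epsilon> * C"
      using \<open>\<epsilon> > 0\<close> \<open>h > 0\<close> that close drift_le by (intro frozen_oscillation_le) auto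
    also have "\<dots> \<le> 2 * K * \<rho> * h + \<gamma> * (2 * \<theta>) + 2 * \<epsilon> * C"
      using \<open>real (Suc k) * h \<le> \<theta>\<close> \<open>h > 0\<close> \<open>\<gamma> \<ge> 0\<close> \<open>\<rho> \<ge> 0\<close> \<open>\<epsilon> > 0\<close> K_pos
      by (intro add_mono mult_left_mono) (auto simp: algebra_simps)
    finally show ?thesis
      by (simp add: mult_ac)
  qed
  show "oscillation \<epsilon> integrable_on {0..\<theta>}"
    using \<open>\<epsilon> > 0\<close> by (intro integrable_continuous_interval continuous_on_diff continuous_on_field_a
        continuous_on_avg_a)
  show "norm (oscillation \<epsilon> s) \<le> 2 * K" if "s \<in> {0..\<theta>}" for s
    using that norm_triangle_ineq4[of "rotated_field \<Lambda> P (s / \<epsilon>) (a s)" "avg \<Lambda> P (a s)"]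
      norm_field_le[of "a s" "s / \<epsilon>"] norm_avg_le[of "a s"] norm_a_le[of s]
    by simp
qed (use assms K_pos \<theta>_pos in auto)

lemma uniform_drift_bound:
  fixes z :: "nat \<Rightarrow> complex^'n"
  assumes "\<And>k. k < N \<Longrightarrow> norm (z k) \<le> 2 * R" and "\<gamma> > 0"
  obtains T1 where "T1 > 0" and "\<And>k T. k < N \<Longrightarrow> T \<ge> 0 \<Longrightarrow> norm (drift (z k) T) \<le> \<gamma> * T + 2 * K * T1"
proof -
  have "\<forall>\<^sub>F T in at_top. \<forall>k\<in>{..<N}.
      dist (time_average (\<lambda>t. rotated_field \<Lambda> P t (z k)) T) (avg \<Lambda> P (z k)) < \<gamma>"
    using \<open>\<gamma> > 0\<close> has_forward_mean_field unfolding has_forward_mean_def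
    by (auto intro!: eventually_ball_finite tendstoD)
  then obtain T0 where T0: "\<And>T k. T \<ge> T0 \<Longrightarrow> k < N \<Longrightarrow>
      dist (time_average (\<lambda>t. rotated_field \<Lambda> P t (z k)) T) (avg \<Lambda> P (z k)) < \<gamma>"
    unfolding eventually_at_top_linorder by blast
  show ?thesis
  proof (rule that[of "max T0 1"])
    show "norm (drift (z k) T) \<le> \<gamma> * T + 2 * K * max T0 1" if "k < N" "T \<ge> 0" for k T
      using that assms T0[of _ k]
      by (intro norm_drift_le) (fastforce simp: dist_norm intro: less_imp_le)+
  qed simp
qed

text \<open>Freeze \<open>a\<close> at the nodes of a partition of \<open>[0, \<theta>]\<close> fine enough for uniform continuity;
  at the finitely many frozen points the time averages converge uniformly.\<close>

lemma oscillation_tendsto_0: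
  assumes "\<eta> > 0"
  shows "\<forall>\<^sub>F \<epsilon> in at_right 0. \<forall>\<tau>\<in>{0..\<theta>}. norm (integral {0..\<tau>} (oscillation \<epsilon>)) \<le> \<eta>"
proof -
  define \<rho> where "\<rho> = \<eta> / (8 * K * \<theta>)"
  have "\<rho> > 0"
    using \<open>\<eta> > 0\<close> K_pos \<theta>_pos by (simp add: \<rho>_def)
  obtain d where "d > 0"
    and d: "\<And>x x'. x \<in> {0..\<theta>} \<Longrightarrow> x' \<in> {0..\<theta>} \<Longrightarrow> dist x' x < d \<Longrightarrow> dist (a x') (a x) < \<rho>"
    using compact_uniformly_continuous[OF continuous_on_a compact_Icc, unfolded uniformly_continuous_on_def,
        rule_format, OF \<open>\<rho> > 0\<close>] by blast
  obtain N :: nat where N: "\<theta> / d < real N" "8 * K * \<theta> / \<eta> < real N"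
    using reals_Archimedean2[of "max (\<theta> / d) (8 * K * \<theta> / \<eta>)"] by auto
  have "real N > 0"
    using N(1) \<theta>_pos \<open>d > 0\<close> by (smt (verit) divide_pos_pos)
  define h where "h = \<theta> / real N"
  have "h > 0" and Nh: "real N * h = \<theta>"
    using \<theta>_pos \<open>real N > 0\<close> by (simp_all add: h_def)
  have "h < d"
    using N(1) \<open>d > 0\<close> \<open>real N > 0\<close> by (simp add: h_def divide_simps mult.commute)
  have "2 * K * h \<le> \<eta> / 4"
    using N(2) \<open>\<eta> > 0\<close> \<open>real N > 0\<close> by (simp add: h_def divide_simps mult.commute)
  have close: "norm (a s - a (real k * h)) \<le> \<rho>" if "k < N" "s \<in> {real k * h..real (Suc k) * h}" for k s
  proof -
    have "real (Suc k) * h \<le> \<theta>"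
      using that \<open>h > 0\<close> Nh by (metis Suc_leI mult_right_mono of_nat_le_iff less_imp_le)
    moreover have "0 \<le> real k * h"
      using \<open>h > 0\<close> by simp
    moreover from this have "0 \<le> s"
      using that by simp
    ultimately have "dist (a s) (a (real k * h)) < \<rho>"
      using that \<open>h < d\<close> by (intro d) (auto simp: dist_real_def algebra_simps)
    then show ?thesis
      by (simp add: dist_norm)
  qed
  define \<gamma> where "\<gamma> = \<eta> / (8 * real N * \<theta>)"
  have "\<gamma> > 0"
    using \<open>\<eta> > 0\<close> \<open>real N > 0\<close> \<theta>_pos by (simp add: \<gamma>_def)
  have "norm (a (real k * h)) \<le> 2 * R" if "k < N" for k
    using that \<open>h > 0\<close> Nh by (intro norm_a_le) (auto intro: order_trans[OF mult_right_mono[of "real k" "real N" h]])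
  then obtain T1 where "T1 > 0"
    and drift_le: "\<And>k T. k < N \<Longrightarrow> T \<ge> 0 \<Longrightarrow> norm (drift (a (real k * h)) T) \<le> \<gamma> * T + 2 * K * T1"
    by (rule uniform_drift_bound[where z = "\<lambda>k. a (real k * h)", OF _ \<open>\<gamma> > 0\<close>]) blast+
  define \<epsilon>0 where "\<epsilon>0 = \<eta> / (16 * real N * K * T1)"
  have "\<epsilon>0 > 0"
    using \<open>\<eta> > 0\<close> \<open>real N > 0\<close> K_pos \<open>T1 > 0\<close> by (simp add: \<epsilon>0_def)
  show ?thesis
    unfolding eventually_at_right_field
  proof (intro exI[of _ \<epsilon>0] conjI allI impI ballI \<open>\<epsilon>0 > 0\<close>)
    fix \<epsilon> \<tau> :: real
    assume "0 < \<epsilon>" "\<epsilon> < \<epsilon>0" "\<tau> \<in> {0..\<theta>}"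
    have "norm (integral {0..\<tau>} (oscillation \<epsilon>))
        \<le> real N * (2 * K * \<rho> * h + 2 * \<gamma> * \<theta> + 2 * \<epsilon> * (2 * K * T1)) + 2 * K * h"
      using \<open>0 < \<epsilon>\<close> \<open>h > 0\<close> \<open>\<rho> > 0\<close> \<open>\<gamma> > 0\<close> \<open>T1 > 0\<close> K_pos \<open>\<tau> \<in> {0..\<theta>}\<close>
      by (intro oscillation_le_partition[OF _ _ Nh close drift_le]) auto
    also have "\<dots> \<le> \<eta>"
    proof -
      have "real N * (2 * K * \<rho> * h) = \<eta> / 4" "real N * (2 * \<gamma> * \<theta>) = \<eta> / 4"
        using \<open>real N > 0\<close> K_pos \<theta>_pos Nh by (simp_all add: \<rho>_def \<gamma>_def field_simps)
      moreover have "real N * (2 * \<epsilon> * (2 * K * T1)) \<le> real N * (2 * \<epsilon>0 * (2 * K * T1))"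
        using \<open>\<epsilon> < \<epsilon>0\<close> \<open>real N > 0\<close> K_pos \<open>T1 > 0\<close> by (intro mult_left_mono) auto
      moreover have "real N * (2 * \<epsilon>0 * (2 * K * T1)) = \<eta> / 4"
        using \<open>real N > 0\<close> K_pos \<open>T1 > 0\<close> by (simp add: \<epsilon>0_def field_simps)
      ultimately show ?thesis
        using \<open>2 * K * h \<le> \<eta> / 4\<close> by (simp add: algebra_simps)
    qed
    finally show "norm (integral {0..\<tau>} (oscillation \<epsilon>)) \<le> \<eta>" .
  qed
qed

lemma rotated_solution_close_to_averaged:
  assumes v_init: "\<And>\<epsilon>. \<epsilon> > 0 \<Longrightarrow> v \<epsilon> 0 = v0"
    and v_ode: "\<And>\<epsilon> t. \<epsilon> > 0 \<Longrightarrow> t \<in> {0..\<theta> / \<epsilon>} \<Longrightarrow>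
      (v \<epsilon> has_vector_derivative (\<chi> j. - \<i> * complex_of_real (\<Lambda> $ j) * (v \<epsilon> t $ j)
        + complex_of_real \<epsilon> * (P (v \<epsilon> t) $ j))) (at t within {0..\<theta> / \<epsilon>})"
    and "\<eta> > 0"
  shows "\<forall>\<^sub>F \<epsilon> in at_right 0. \<forall>t\<in>{0..\<theta> / \<epsilon>}. norm (Phi (t *\<^sub>R \<Lambda>) (v \<epsilon> t) - a (\<epsilon> * t)) \<le> \<eta>"
proof -
  have "\<forall>\<^sub>F \<epsilon> in at_right 0. \<forall>\<tau>\<in>{0..\<theta>}. norm (integral {0..\<tau>} (oscillation \<epsilon>)) \<le> \<eta> / exp (2 * K * \<theta>)"
    using \<open>\<eta> > 0\<close> by (intro oscillation_tendsto_0) simp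
  then show ?thesis
    using eventually_at_right_less[of "0::real"]
  proof eventually_elim
    case (elim \<epsilon>)
    define b where "b \<tau> = Phi ((\<tau> / \<epsilon>) *\<^sub>R \<Lambda>) (v \<epsilon> (\<tau> / \<epsilon>))" for \<tau>
    have b_ode: "(b has_vector_derivative rotated_field \<Lambda> P (\<tau> / \<epsilon>) (b \<tau>)) (at \<tau> within {0..\<theta>})"
      if "\<tau> \<in> {0..\<theta>}" for \<tau>
      unfolding b_def using elim(2) that
      by (intro rescaled_interaction_has_vector_derivative v_ode) (auto simp: divide_right_mono)
    have "b 0 = v0"
      using v_init[OF elim(2)] by (simp add: b_def)
    show ?case
    proof
      fix t
      assume "t \<in> {0..\<theta> / \<epsilon>}"
      then have "\<epsilon> * t \<in> {0..\<theta>}"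
        using elim(2) by (auto simp: field_simps)
      then have "norm (b (\<epsilon> * t) - a (\<epsilon> * t)) \<le> \<eta> / exp (2 * K * \<theta>) * exp (2 * K * \<theta>)"
        using elim(1) by (intro error_le_oscillation[OF elim(2) \<open>b 0 = v0\<close> b_ode]) auto
      then show "norm (Phi (t *\<^sub>R \<Lambda>) (v \<epsilon> t) - a (\<epsilon> * t)) \<le> \<eta>"
        using elim(2) by (simp add: b_def)
    qed
  qed
qed

end

lemma averaging_problem_of_two_sided:
  assumes P_Lip: "Lip_X X P" and "norm v0 = R" "R > 0" "X (2 * R) > 0" "\<theta> = R / X (2 * R)" "a 0 = v0"
    and a_ode: "\<forall>\<tau>\<in>{-\<theta>..\<theta>}. (a has_vector_derivative avg \<Lambda> P (a \<tau>)) (at \<tau> within {-\<theta>..\<theta>})"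
  shows "averaging_problem \<Lambda> P X v0 R \<theta> a"
    and "averaging_problem (- \<Lambda>) (\<lambda>z. - P z) X v0 R \<theta> (\<lambda>\<tau>. a (- \<tau>))"
proof -
  show "averaging_problem \<Lambda> P X v0 R \<theta> a"
  proof
    show "(a has_vector_derivative avg \<Lambda> P (a \<tau>)) (at \<tau> within {0..\<theta>})" if "\<tau> \<in> {0..\<theta>}" for \<tau>
      using that by (intro has_vector_derivative_within_subset[OF a_ode[rule_format]]) auto
  qed (rule assms)+
  have "((\<lambda>\<tau>. a (- \<tau>)) has_vector_derivative avg (- \<Lambda>) (\<lambda>z. - P z) (a (- \<tau>))) (at \<tau> within {0..\<theta>})"
    if "\<tau> \<in> {0..\<theta>}" for \<tau>
  proof -
    have "(a has_vector_derivative avg \<Lambda> P (a (- \<tau>))) (at (- \<tau>) within uminus ` {0..\<theta>})"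
      using that by (intro has_vector_derivative_within_subset[OF a_ode[rule_format]]) auto
    then have "(a \<circ> uminus has_vector_derivative (-1) *\<^sub>R avg \<Lambda> P (a (- \<tau>))) (at \<tau> within {0..\<theta>})"
      by (intro vector_diff_chain_within)
        (auto simp flip: has_real_derivative_iff_has_vector_derivative intro!: derivative_eq_intros)
    then show ?thesis
      using avg_reflect[OF Lip_XD(1)[OF P_Lip order_refl]] by (simp add: o_def)
  qed
  then show "averaging_problem (- \<Lambda>) (\<lambda>z. - P z) X v0 R \<theta> (\<lambda>\<tau>. a (- \<tau>))"
    using assms Lip_X_minus by unfold_locales simp_all
qed

lemma reflected_solution_has_vector_derivative:
  assumes "(v has_vector_derivative (\<chi> j. - \<i> * complex_of_real (\<Lambda> $ j) * (v (- t) $ j)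
      + complex_of_real \<epsilon> * (P (v (- t)) $ j))) (at (- t) within uminus ` S)"
  shows "((\<lambda>t. v (- t)) has_vector_derivative (\<chi> j. - \<i> * complex_of_real ((- \<Lambda>) $ j) * (v (- t) $ j)
      + complex_of_real \<epsilon> * ((- P (v (- t))) $ j))) (at t within S)"
proof -
  have "(v \<circ> uminus has_vector_derivative (-1) *\<^sub>R (\<chi> j. - \<i> * complex_of_real (\<Lambda> $ j) * (v (- t) $ j)
      + complex_of_real \<epsilon> * (P (v (- t)) $ j))) (at t within S)"
    using assms by (intro vector_diff_chain_within)
      (auto simp flip: has_real_derivative_iff_has_vector_derivative intro!: derivative_eq_intros)
  moreover have "(-1::real) *\<^sub>R (\<chi> j. - \<i> * complex_of_real (\<Lambda> $ j) * (v (- t) $ j)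
      + complex_of_real \<epsilon> * (P (v (- t)) $ j))
      = (\<chi> j. - \<i> * complex_of_real ((- \<Lambda>) $ j) * (v (- t) $ j)
      + complex_of_real \<epsilon> * ((- P (v (- t))) $ j))"
    by (simp add: vec_eq_iff algebra_simps)
  ultimately show ?thesis
    by (simp add: o_def)
qed

lemma abs_norm_nth_diff_le:
  fixes x y :: "'a::real_normed_vector^'n"
  shows "\<bar>norm (x $ j) - norm (y $ j)\<bar> \<le> norm (x - y)"
  using norm_triangle_ineq3[of "x $ j" "y $ j"] Finite_Cartesian_Product.norm_nth_le[of "x - y" j] by simp

lemma tendsto_SUP_0_if_uniformly_small:
  fixes f :: "'a \<Rightarrow> 'b \<Rightarrow> real"
  assumes "\<forall>\<^sub>F x in F. S x \<noteq> {}" "\<And>x t. 0 \<le> f x t"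
    and small: "\<And>\<eta>. \<eta> > 0 \<Longrightarrow> \<forall>\<^sub>F x in F. \<forall>t\<in>S x. f x t \<le> \<eta>"
  shows "((\<lambda>x. SUP t\<in>S x. f x t) \<longlongrightarrow> 0) F"
proof (rule tendstoI)
  fix e :: real
  assume "e > 0"
  then have "\<forall>\<^sub>F x in F. \<forall>t\<in>S x. f x t \<le> e / 2"
    by (intro small) simp
  with assms(1) show "\<forall>\<^sub>F x in F. dist (SUP t\<in>S x. f x t) 0 < e"
  proof (eventually_elim)
    case (elim x)
    then obtain t0 where "t0 \<in> S x" by blast
    have "(SUP t\<in>S x. f x t) \<le> e / 2"
      using elim by (intro cSUP_least) auto
    moreover have "f x t0 \<le> (SUP t\<in>S x. f x t)"
      using \<open>t0 \<in> S x\<close> elim by (intro cSUP_upper bdd_aboveI2[where M = "e / 2"]) auto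
    ultimately show ?case
      using assms(2)[of x t0] \<open>e > 0\<close> by (simp add: dist_real_def)
  qed
qed

lemma solution_close_to_averaged:
  fixes \<Lambda> :: "real^'n" and P :: "complex^'n \<Rightarrow> complex^'n" and a :: "real \<Rightarrow> complex^'n"
    and v :: "real \<Rightarrow> real \<Rightarrow> complex^'n"
  assumes P_Lip: "Lip_X X P" and "norm v0 = R" "R > 0" "X (2 * R) > 0" "\<theta> = R / X (2 * R)" "a 0 = v0"
    and a_ode: "\<forall>\<tau>\<in>{-\<theta>..\<theta>}. (a has_vector_derivative avg \<Lambda> P (a \<tau>)) (at \<tau> within {-\<theta>..\<theta>})"
    and v_init: "\<forall>\<epsilon>>0. v \<epsilon> 0 = v0"
    and v_ode: "\<forall>\<epsilon>>0. \<forall>t\<in>{-\<theta>/\<epsilon>..\<theta>/\<epsilon>}.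
      (v \<epsilon> has_vector_derivative (\<chi> j. - \<i> * complex_of_real (\<Lambda> $ j) * (v \<epsilon> t $ j)
        + complex_of_real \<epsilon> * (P (v \<epsilon> t) $ j))) (at t within {-\<theta>/\<epsilon>..\<theta>/\<epsilon>})"
    and "\<eta> > 0"
  shows "\<forall>\<^sub>F \<epsilon> in at_right 0. \<forall>t\<in>{-\<theta>/\<epsilon>..\<theta>/\<epsilon>}. \<bar>norm (v \<epsilon> t $ j) - norm (a (\<epsilon> * t) $ j)\<bar> \<le> \<eta>"
proof -
  note problems = averaging_problem_of_two_sided[OF P_Lip assms(2-6) a_ode]
  have "\<theta> \<ge> 0"
    using assms(3-5) by simp
  have "\<forall>\<^sub>F \<epsilon> in at_right 0. \<forall>t\<in>{0..\<theta> / \<epsilon>}. norm (Phi (t *\<^sub>R \<Lambda>) (v \<epsilon> t) - a (\<epsilon> * t)) \<le> \<eta>"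
    using v_init v_ode \<open>\<eta> > 0\<close> \<open>\<theta> \<ge> 0\<close>
    by (intro averaging_problem.rotated_solution_close_to_averaged[OF problems(1)]
        has_vector_derivative_within_subset[OF v_ode[rule_format]]) auto
  moreover have "\<forall>\<^sub>F \<epsilon> in at_right 0. \<forall>t\<in>{0..\<theta> / \<epsilon>}.
      norm (Phi (t *\<^sub>R - \<Lambda>) (v \<epsilon> (- t)) - a (- (\<epsilon> * t))) \<le> \<eta>"
    using v_init v_ode \<open>\<eta> > 0\<close> \<open>\<theta> \<ge> 0\<close>
    by (intro averaging_problem.rotated_solution_close_to_averaged[OF problems(2), where v = "\<lambda>\<epsilon> t. v \<epsilon> (- t)"]
        reflected_solution_has_vector_derivative has_vector_derivative_within_subset[OF v_ode[rule_format]])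
      auto
  ultimately show ?thesis
    using eventually_at_right_less[of "0::real"]
  proof eventually_elim
    case (elim \<epsilon>)
    show ?case
    proof
      fix t
      assume "t \<in> {-\<theta>/\<epsilon>..\<theta>/\<epsilon>}"
      then consider "t \<in> {0..\<theta> / \<epsilon>}" | "- t \<in> {0..\<theta> / \<epsilon>}"
        by fastforce
      then show "\<bar>norm (v \<epsilon> t $ j) - norm (a (\<epsilon> * t) $ j)\<bar> \<le> \<eta>"
      proof cases
        case 1
        then have "norm (Phi (t *\<^sub>R \<Lambda>) (v \<epsilon> t) - a (\<epsilon> * t)) \<le> \<eta>"
          using elim(1) by blast
        then show ?thesis
          using abs_norm_nth_diff_le[where x = "Phi (t *\<^sub>R \<Lambda>) (v \<epsilon> t)" and y = "a (\<epsilon> * t)" and j = j] by simp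
      next
        case 2
        then have "norm (Phi ((- t) *\<^sub>R - \<Lambda>) (v \<epsilon> t) - a (\<epsilon> * t)) \<le> \<eta>"
          using elim(2) by fastforce
        then show ?thesis
          using abs_norm_nth_diff_le[where x = "Phi ((- t) *\<^sub>R - \<Lambda>) (v \<epsilon> t)" and y = "a (\<epsilon> * t)" and j = j] by simp
      qed
    qed
  qed
qed

theorem corollary4p1:
  fixes \<Lambda> :: "real^'n"
    and P :: "complex^'n \<Rightarrow> complex^'n"
    and X :: "real \<Rightarrow> real"
    and v0 :: "complex^'n"
    and R \<theta> :: real
    and a :: "real \<Rightarrow> complex^'n"
    and v :: "real \<Rightarrow> real \<Rightarrow> complex^'n"
  assumes \<Lambda>_nz: "\<forall>j. \<Lambda> $ j \<noteq> 0"
    and X_mono: "mono_on {0..} X" and X_cont: "continuous_on {0..} X" and X_nonneg: "\<forall>r\<ge>0. X r \<ge> 0"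
    and P_Lip: "Lip_X X P"
    and R_def: "norm v0 = R" and R_pos: "R > 0"
    and X2R: "X (2 * R) > 0"
    and \<theta>_def: "\<theta> = R / X (2 * R)"
    and a_init: "a 0 = v0"
    and a_ode: "\<forall>\<tau>\<in>{-\<theta>..\<theta>}. (a has_vector_derivative avg \<Lambda> P (a \<tau>)) (at \<tau> within {-\<theta>..\<theta>})"
    and v_init: "\<forall>\<epsilon>>0. v \<epsilon> 0 = v0"
    and v_ode: "\<forall>\<epsilon>>0. \<forall>t\<in>{-\<theta>/\<epsilon>..\<theta>/\<epsilon>}.
        (v \<epsilon> has_vector_derivative
           (\<chi> j. - \<i> * complex_of_real (\<Lambda> $ j) * (v \<epsilon> t $ j)
                 + complex_of_real \<epsilon> * (P (v \<epsilon> t) $ j)))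
        (at t within {-\<theta>/\<epsilon>..\<theta>/\<epsilon>})"
  shows "\<forall>j. ((\<lambda>\<epsilon>. SUP t\<in>{-\<theta>/\<epsilon>..\<theta>/\<epsilon>}. \<bar>norm (v \<epsilon> t $ j) - norm (a (\<epsilon> * t) $ j)\<bar>)
              \<longlongrightarrow> 0) (at_right 0)"
proof
  fix j
  have "\<theta> > 0"
    using R_pos X2R \<theta>_def by simp
  then have "\<forall>\<^sub>F \<epsilon> in at_right 0. {-\<theta>/\<epsilon>..\<theta>/\<epsilon>} \<noteq> {}"
    by (auto simp: eventually_at_right_field intro: exI[of _ 1])
  then show "((\<lambda>\<epsilon>. SUP t\<in>{-\<theta>/\<epsilon>..\<theta>/\<epsilon>}. \<bar>norm (v \<epsilon> t $ j) - norm (a (\<epsilon> * t) $ j)\<bar>) \<longlongrightarrow> 0) (at_right 0)"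
    using solution_close_to_averaged[OF P_Lip R_def R_pos X2R \<theta>_def a_init a_ode v_init v_ode]
    by (intro tendsto_SUP_0_if_uniformly_small) auto
qed

end
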